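(* Let $m\le n$ be positive integers, let $\mathbf{a}=(a_1,\dots,a_m)$ be integers with $n=a_1>a_2>\cdots>a_m\ge 1$, and let $\boldsymbol{\varepsilon}=(\varepsilon_1,\dots,\varepsilon_m)\in\{0,1\}^m$. For $0\le k\le n$, let $f(\mathbf{a},\boldsymbol{\varepsilon},k)$ be the number of nonintersecting chord diagrams $F$ in the multiset $\mathcal{NCD}(E(\mathbf{a},\boldsymbol{\varepsilon}))$ (counted with multiplicity) with $e_F(Y)+e_F(X\cup Z)=k$. Let $g(\mathbf{a},\boldsymbol{\varepsilon},k)$ be the number of $0$-$1$ Young diagrams $M$ of shape $\mathbf{a}$ such that (1) every column of $M$ contains at most one $1$; (2) for each $1\le i\le m$, the number of $1$'s in the $i$th row of $M$ is congruent to $\varepsilon_i$ modulo $2$; (3) $M$ contains exactly $k$ entries equal to $1$. Then $f(\mathbf{a},\boldsymbol{\varepsilon},k)=g(\mathbf{a},\boldsymbol{\varepsilon},k)$.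
   Context: A chord is a line segment whose endpoints lie on a circle; a chord diagram is a set of chords no two of which share an endpoint. A crossing is a pair of chords that intersect in the interior of the disk; a chord diagram is nonintersecting if it has no crossing. If $E$ has a crossing $S=\{ac,bd\}$ where $a,b,c,d$ appear in this cyclic order on the circle, the chord expansion of $E$ with respect to $S$ replaces $E$ by the two chord diagrams $E_1=(E\setminus S)\cup\{ab,cd\}$ and $E_2=(E\setminus S)\cup\{da,bc\}$. Iterating expansions until no crossings remain yields a multiset of nonintersecting chord diagrams, which is known to be independent of the choices of expansions; it is denoted $\mathcal{NCD}(E)$. For a chord diagram $F$ and a set $U$ of points, $e_F(U)$ is the number of chords of $F$ with both endpoints in $U$. Construction of $E(\mathbf{a},\boldsymbol{\varepsilon})$: take points $X=\{x_1,\dots,x_m\}$, $Y=\{y_1,\dots,y_n\}$, $Z=\{z_1,\dots,z_n\}$ placed on the circle in the anticlockwise order $x_1,x_2,\dots,x_m,z_1,z_2,\dots,z_n,y_n,y_{n-1},\dots,y_1$. Then $E(\mathbf{a},\boldsymbol{\varepsilon})=\{x_iy_{a_i}: \varepsilon_i=0\}\cup\{x_iz_{a_i}:\varepsilon_i=1\}\cup\{y_jz_j: j\in\{1,\dots,n\}\setminus\{a_1,\dots,a_m\}\}$, a chord diagram with $n$ chords (unused points are ignored). A $0$-$1$ Young diagram of shape $\mathbf{a}$ is a Young diagram with rows of lengths $a_1,\dots,a_m$ (left-justified, English convention) in which each box holds a value $0$ or $1$. *)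

theory Defs
  imports Main "HOL-Library.Multiset"
begin

text \<open>Points on the circle are natural numbers; their anticlockwise cyclic order is the
  order of the natural numbers (read cyclically). A chord is a 2-element set of points,
  a chord diagram is a set of chords.\<close>

type_synonym chord_diagram = "nat set set"

definition crosses :: "nat set \<Rightarrow> nat set \<Rightarrow> bool" where
  "crosses C D \<longleftrightarrow> (\<exists>a b c d. a < b \<and> b < c \<and> c < d \<and>
      ((C = {a, c} \<and> D = {b, d}) \<or> (C = {b, d} \<and> D = {a, c})))"

definition nonintersecting :: "chord_diagram \<Rightarrow> bool" where
  "nonintersecting E \<longleftrightarrow> \<not> (\<exists>C\<in>E. \<exists>D\<in>E. crosses C D)"

text \<open>Iterated chord expansion: \<open>ncd_rel E M\<close> means that some sequence of expansions of
  \<open>E\<close> (until no crossings remain) yields the multiset \<open>M\<close> of nonintersecting diagrams.\<close>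
inductive ncd_rel :: "chord_diagram \<Rightarrow> chord_diagram multiset \<Rightarrow> bool" where
  base: "nonintersecting E \<Longrightarrow> ncd_rel E {#E#}"
| expand: "\<lbrakk> {a, c} \<in> E; {b, d} \<in> E; a < b; b < c; c < d;
     ncd_rel ((E - {{a, c}, {b, d}}) \<union> {{a, b}, {c, d}}) M1;
     ncd_rel ((E - {{a, c}, {b, d}}) \<union> {{d, a}, {b, c}}) M2 \<rbrakk>
   \<Longrightarrow> ncd_rel E (M1 + M2)"

text \<open>The multiset NCD(E) (well defined since the result is independent of choices).\<close>
definition NCD :: "chord_diagram \<Rightarrow> chord_diagram multiset" where
  "NCD E = (THE M. ncd_rel E M)"

definition e_count :: "chord_diagram \<Rightarrow> nat set \<Rightarrow> nat" where
  "e_count F U = card {C \<in> F. C \<subseteq> U}"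

text \<open>Positions: x_i = i (1..m), z_j = m + j (1..n), y_j = m + 2n + 1 - j, so that the
  anticlockwise order is x_1..x_m, z_1..z_n, y_n..y_1.\<close>
definition xpt :: "nat \<Rightarrow> nat \<Rightarrow> nat \<Rightarrow> nat" where "xpt m n i = i"
definition zpt :: "nat \<Rightarrow> nat \<Rightarrow> nat \<Rightarrow> nat" where "zpt m n j = m + j"
definition ypt :: "nat \<Rightarrow> nat \<Rightarrow> nat \<Rightarrow> nat" where "ypt m n j = m + 2 * n + 1 - j"

definition Xset :: "nat \<Rightarrow> nat \<Rightarrow> nat set" where "Xset m n = xpt m n ` {1..m}"
definition Yset :: "nat \<Rightarrow> nat \<Rightarrow> nat set" where "Yset m n = ypt m n ` {1..n}"
definition Zset :: "nat \<Rightarrow> nat \<Rightarrow> nat set" where "Zset m n = zpt m n ` {1..n}"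

definition Ediag :: "nat \<Rightarrow> nat \<Rightarrow> (nat \<Rightarrow> nat) \<Rightarrow> (nat \<Rightarrow> nat) \<Rightarrow> chord_diagram" where
  "Ediag m n a \<epsilon> =
     {{xpt m n i, ypt m n (a i)} | i. i \<in> {1..m} \<and> \<epsilon> i = 0}
   \<union> {{xpt m n i, zpt m n (a i)} | i. i \<in> {1..m} \<and> \<epsilon> i = 1}
   \<union> {{ypt m n j, zpt m n j} | j. j \<in> {1..n} - a ` {1..m}}"

definition f_count :: "nat \<Rightarrow> nat \<Rightarrow> (nat \<Rightarrow> nat) \<Rightarrow> (nat \<Rightarrow> nat) \<Rightarrow> nat \<Rightarrow> nat" where
  "f_count m n a \<epsilon> k =
     size (filter_mset (\<lambda>F. e_count F (Yset m n) + e_count F (Xset m n \<union> Zset m n) = k)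
                       (NCD (Ediag m n a \<epsilon>)))"

text \<open>0-1 Young diagrams of shape a: box (i,j) with 1 \<le> i \<le> m, 1 \<le> j \<le> a_i holds a value
  in {0,1} (True = 1); outside the shape the function is False.\<close>
definition young01 :: "nat \<Rightarrow> (nat \<Rightarrow> nat) \<Rightarrow> (nat \<times> nat \<Rightarrow> bool) set" where
  "young01 m a = {M. \<forall>i j. M (i, j) \<longrightarrow> (i \<in> {1..m} \<and> j \<in> {1..a i})}"

definition g_count :: "nat \<Rightarrow> (nat \<Rightarrow> nat) \<Rightarrow> (nat \<Rightarrow> nat) \<Rightarrow> nat \<Rightarrow> nat" where
  "g_count m a \<epsilon> k = card {M \<in> young01 m a.
      (\<forall>j. card {i \<in> {1..m}. M (i, j)} \<le> 1) \<and>
      (\<forall>i \<in> {1..m}. card {j \<in> {1..a i}. M (i, j)} mod 2 = \<epsilon> i mod 2) \<and>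
      card {p. M p} = k}"

end

(* The multiset NCD(E) is well defined because, for every point set S, the sign
   diagram_sign S E (one factor +1, -1 or 0 per chord, according to which of its
   endpoints lies in S) satisfies the three-term relation of a chord expansion, while on
   noncrossing diagrams these signs are unitriangular with respect to the set of left
   endpoints; hence every complete expansion produces the same multiset.

   E(a, eps) is then expanded row by row, from x_m up to x_1.  The chord of x_i is swept
   across the rungs y_c z_c of the columns c < a_i that are still free; at each crossing
   one branch keeps the rung (a 0 in cell (i, c)) and the other closes off a chord
   inside X u Z or inside Y and retires column c (a 1 in cell (i, c)).  The parity of
   the chords closed in row i decides whether the chord of x_i itself closes or becomes
   the rung of column a_i, exactly as the parity condition fixes the last cell (i, a_i).
   Closed chords are what e_F(Y) + e_F(X u Z) counts, so both sides obey the same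
   recursion. *)

theory Submission
  imports Defs
begin

section \<open>Chord expansion and its sign invariant\<close>

definition proper_diagram :: "chord_diagram \<Rightarrow> bool" where
  "proper_diagram E \<longleftrightarrow> finite E \<and> (\<forall>C\<in>E. card C = 2) \<and> (\<forall>C\<in>E. \<forall>D\<in>E. C \<noteq> D \<longrightarrow> C \<inter> D = {})"

definition chord_sign :: "nat set \<Rightarrow> nat set \<Rightarrow> int" where
  "chord_sign S C = (if card (C \<inter> S) = 1 then (if Max C \<in> S then -1 else 1) else 0)"

definition diagram_sign :: "nat set \<Rightarrow> chord_diagram \<Rightarrow> int" where
  "diagram_sign S E = (\<Prod>C\<in>E. chord_sign S C)"

lemma chord_sign_pair:
  assumes "x < y"
  shows "chord_sign S {x, y} = (if x \<in> S \<and> y \<notin> S then 1 else if x \<notin> S \<and> y \<in> S then -1 else 0)"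
  using assms by (cases "x \<in> S"; cases "y \<in> S") (auto simp: chord_sign_def Int_insert_left max_def)

lemma chord_sign_expansion:
  assumes "a < b" "b < c" "c < d"
  shows "chord_sign S {a, c} * chord_sign S {b, d}
       = chord_sign S {a, b} * chord_sign S {c, d} + chord_sign S {d, a} * chord_sign S {b, c}"
proof -
  have "{d, a} = {a, d}" by auto
  then show ?thesis using assms
    by (cases "a \<in> S"; cases "b \<in> S"; cases "c \<in> S"; cases "d \<in> S") (simp_all add: chord_sign_pair)
qed

lemma proper_diagram_disjoint:
  "proper_diagram E \<Longrightarrow> C \<in> E \<Longrightarrow> D \<in> E \<Longrightarrow> C \<noteq> D \<Longrightarrow> C \<inter> D = {}"
  unfolding proper_diagram_def by blast

lemma proper_diagram_chord:
  assumes "proper_diagram E" "C \<in> E"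
  obtains x y where "x < y" "C = {x, y}"
proof -
  have "card C = 2" using assms unfolding proper_diagram_def by blast
  then obtain x y where "C = {x, y}" "x \<noteq> y" by (meson card_2_iff)
  then show thesis using that by (metis insert_commute linorder_neqE_nat)
qed

lemma proper_diagram_Min_Max:
  assumes "proper_diagram E" "C \<in> E"
  shows "C = {Min C, Max C}" "Min C < Max C"
proof -
  obtain x y where "x < y" "C = {x, y}" using proper_diagram_chord[OF assms] .
  then show "C = {Min C, Max C}" "Min C < Max C" by auto
qed

lemma proper_diagram_insert:
  assumes "proper_diagram R" "card C = 2" "C \<inter> \<Union>R = {}"
  shows "proper_diagram (insert C R)"
  using assms unfolding proper_diagram_def by blast

lemma proper_diagram_image_pairs:
  assumes "finite I" "inj_on l I" "inj_on r I" "l ` I \<inter> r ` I = {}"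
  shows "proper_diagram ((\<lambda>i. {l i, r i}) ` I)"
  unfolding proper_diagram_def
proof (intro conjI ballI impI)
  show "finite ((\<lambda>i. {l i, r i}) ` I)" using assms(1) by simp
next
  fix C assume "C \<in> (\<lambda>i. {l i, r i}) ` I"
  then obtain i where "i \<in> I" "C = {l i, r i}" by blast
  moreover from this have "l i \<noteq> r i" using assms(4) by blast
  ultimately show "card C = 2" by simp
next
  fix C D assume "C \<in> (\<lambda>i. {l i, r i}) ` I" "D \<in> (\<lambda>i. {l i, r i}) ` I" "C \<noteq> D"
  then obtain i j where "i \<in> I" "j \<in> I" "i \<noteq> j" "C = {l i, r i}" "D = {l j, r j}" by blast
  then show "C \<inter> D = {}" using inj_onD[OF assms(2)] inj_onD[OF assms(3)] assms(4) by blast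
qed

lemma proper_diagram_expand:
  assumes E: "proper_diagram E" and S: "{a, c} \<in> E" "{b, d} \<in> E" and abcd: "a < b" "b < c" "c < d"
  shows "proper_diagram ((E - {{a, c}, {b, d}}) \<union> {{a, b}, {c, d}})"
    and "proper_diagram ((E - {{a, c}, {b, d}}) \<union> {{d, a}, {b, c}})"
proof -
  define R where "R = E - {{a, c}, {b, d}}"
  have R: "proper_diagram R" using E unfolding proper_diagram_def R_def by auto
  have apart: "\<Union>R \<inter> {a, b, c, d} = {}"
    using proper_diagram_disjoint[OF E _ S(1)] proper_diagram_disjoint[OF E _ S(2)] unfolding R_def by blast
  have "proper_diagram (insert {a, b} (insert {c, d} R))"
    by (intro proper_diagram_insert) (use R apart abcd in auto)
  then show "proper_diagram (R \<union> {{a, b}, {c, d}})" by simp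
  have "proper_diagram (insert {d, a} (insert {b, c} R))"
    by (intro proper_diagram_insert) (use R apart abcd in auto)
  then show "proper_diagram (R \<union> {{d, a}, {b, c}})" by simp
qed

lemma diagram_sign_expand:
  assumes E: "proper_diagram E" and S: "{a, c} \<in> E" "{b, d} \<in> E" and abcd: "a < b" "b < c" "c < d"
  shows "diagram_sign T E = diagram_sign T ((E - {{a, c}, {b, d}}) \<union> {{a, b}, {c, d}})
                          + diagram_sign T ((E - {{a, c}, {b, d}}) \<union> {{d, a}, {b, c}})"
proof -
  define R where "R = E - {{a, c}, {b, d}}"
  have fin: "finite R" using E unfolding proper_diagram_def R_def by auto
  have apart: "X \<inter> {a, b, c, d} = {}" if "X \<in> R" for X
    using that proper_diagram_disjoint[OF E _ S(1)] proper_diagram_disjoint[OF E _ S(2)]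
    unfolding R_def by blast
  then have notR: "{a, b} \<notin> R" "{c, d} \<notin> R" "{d, a} \<notin> R" "{b, c} \<notin> R" "{a, c} \<notin> R" "{b, d} \<notin> R"
    by fastforce+
  have ne: "{a, c} \<noteq> {b, d}" "{a, b} \<noteq> {c, d}" "{d, a} \<noteq> {b, c}"
    using abcd by (auto simp: doubleton_eq_iff)
  have "E = insert {a, c} (insert {b, d} R)" using S unfolding R_def by auto
  then have "diagram_sign T E = chord_sign T {a, c} * chord_sign T {b, d} * diagram_sign T R"
    unfolding diagram_sign_def using fin notR ne by simp
  moreover have "diagram_sign T (R \<union> {{a, b}, {c, d}}) = chord_sign T {a, b} * chord_sign T {c, d} * diagram_sign T R"
    unfolding diagram_sign_def using fin notR ne by (simp add: insert_commute)
  moreover have "diagram_sign T (R \<union> {{d, a}, {b, c}}) = chord_sign T {d, a} * chord_sign T {b, c} * diagram_sign T R"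
    unfolding diagram_sign_def using fin notR ne by (simp add: insert_commute)
  ultimately show ?thesis
    unfolding R_def[symmetric] chord_sign_expansion[OF abcd, of T] by (simp add: algebra_simps)
qed

lemma ncd_rel_Union: "ncd_rel E M \<Longrightarrow> F \<in># M \<Longrightarrow> \<Union>F = \<Union>E"
proof (induction arbitrary: F rule: ncd_rel.induct)
  case (expand a c E b d M1 M2)
  have U: "\<Union>((E - {{a, c}, {b, d}}) \<union> {{a, b}, {c, d}}) = \<Union>E"
          "\<Union>((E - {{a, c}, {b, d}}) \<union> {{d, a}, {b, c}}) = \<Union>E"
    using expand.hyps(1,2) by blast+
  consider "F \<in># M1" | "F \<in># M2" using expand.prems by auto
  then show ?case
  proof cases
    case 1 show ?thesis using expand.IH(1)[OF 1] U(1) by (rule trans)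
  next
    case 2 show ?thesis using expand.IH(2)[OF 2] U(2) by (rule trans)
  qed
qed simp

lemma ncd_rel_proper:
  "ncd_rel E M \<Longrightarrow> proper_diagram E \<Longrightarrow> F \<in># M \<Longrightarrow> proper_diagram F \<and> nonintersecting F"
proof (induction arbitrary: F rule: ncd_rel.induct)
  case (expand a c E b d M1 M2)
  note proper = proper_diagram_expand[OF expand.prems(1) expand.hyps(1-5)]
  consider "F \<in># M1" | "F \<in># M2" using expand.prems(2) by auto
  then show ?case
  proof cases
    case 1 show ?thesis by (rule expand.IH(1)[OF proper(1) 1])
  next
    case 2 show ?thesis by (rule expand.IH(2)[OF proper(2) 2])
  qed
qed simp

lemma ncd_rel_diagram_sign:
  "ncd_rel E M \<Longrightarrow> proper_diagram E \<Longrightarrow> diagram_sign T E = (\<Sum>F\<in>#M. diagram_sign T F)"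
proof (induction rule: ncd_rel.induct)
  case (expand a c E b d M1 M2)
  note proper = proper_diagram_expand[OF expand.prems expand.hyps(1-5)]
  show ?case
    unfolding diagram_sign_expand[OF expand.prems expand.hyps(1-5), of T]
      expand.IH(1)[OF proper(1)] expand.IH(2)[OF proper(2)] by simp
qed simp

lemma nonintersecting_no_cross:
  "nonintersecting G \<Longrightarrow> {a, c} \<in> G \<Longrightarrow> {b, d} \<in> G \<Longrightarrow> a < b \<Longrightarrow> b < c \<Longrightarrow> c < d \<Longrightarrow> False"
  unfolding nonintersecting_def crosses_def by blast

lemma transversal_sum_ge_left_ends:
  assumes G: "proper_diagram G" and SU: "S \<subseteq> \<Union>G" and tr: "\<forall>C\<in>G. card (C \<inter> S) = 1"
  shows "sum id (Min ` G) \<le> sum id S" and "sum id S = sum id (Min ` G) \<Longrightarrow> S = Min ` G"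
proof -
  have finG: "finite G" using G by (simp add: proper_diagram_def)
  have finC: "finite C" if "C \<in> G" for C
    using proper_diagram_Min_Max[OF G that] by (metis finite.emptyI finite.insertI)
  have "\<forall>C\<in>G. \<exists>x. C \<inter> S = {x}" using tr by (metis card_1_singletonE)
  then obtain s where s: "C \<inter> S = {s C}" if "C \<in> G" for C by metis
  have sum_S: "sum id S = (\<Sum>C\<in>G. s C)"
  proof -
    have "sum id (\<Union>C\<in>G. C \<inter> S) = (\<Sum>C\<in>G. sum id (C \<inter> S))"
      by (rule sum.UNION_disjoint) (use finG finC proper_diagram_disjoint[OF G] in blast)+
    moreover have "S = (\<Union>C\<in>G. C \<inter> S)" using SU by blast
    ultimately show ?thesis using s by simp
  qed
  have Min_le: "Min C \<le> s C" if "C \<in> G" for C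
    using s[OF that] finC[OF that] by (metis Int_iff Min_le insertI1)
  have "inj_on Min G"
  proof (rule inj_onI)
    fix C D assume "C \<in> G" "D \<in> G" "Min C = Min D"
    then show "C = D"
      using proper_diagram_disjoint[OF G] proper_diagram_Min_Max[OF G] by (metis insertI1 disjoint_iff)
  qed
  then have sum_Min: "sum id (Min ` G) = (\<Sum>C\<in>G. Min C)" by (simp add: sum.reindex)
  show "sum id (Min ` G) \<le> sum id S" unfolding sum_S sum_Min by (rule sum_mono) (rule Min_le)
  assume "sum id S = sum id (Min ` G)"
  then have "\<forall>C\<in>G. s C = Min C"
    using sum_mono_inv[of Min G s] finG Min_le unfolding sum_S sum_Min by (metis order_refl)
  then have "\<forall>C\<in>G. C \<inter> S = {Min C}" using s by simp
  then show "S = Min ` G" using SU by blast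
qed

lemma noncrossing_chord_nested:
  assumes F: "proper_diagram F" "nonintersecting F" and bc: "{b, c} \<in> F" "b < c"
    and E: "E \<in> F" "v \<in> E" "b < v" "v < c"
  shows "b < Min E \<and> Max E < c"
proof -
  obtain x y where xy: "x < y" "E = {x, y}" using proper_diagram_chord[OF F(1) E(1)] .
  have "E \<noteq> {b, c}" using E by auto
  then have "E \<inter> {b, c} = {}" using proper_diagram_disjoint[OF F(1) E(1) bc(1)] by blast
  moreover have False if "x < b" using nonintersecting_no_cross[OF F(2), of x y b c] that xy E bc by auto
  moreover have False if "c < y" using nonintersecting_no_cross[OF F(2), of b c x y] that xy E bc by auto
  ultimately show ?thesis using xy by fastforce
qed

lemma proper_diagram_subset_eq:
  assumes G: "proper_diagram G" and "F \<subseteq> G" "\<Union>G \<subseteq> \<Union>F"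
  shows "F = G"
proof -
  have "D \<in> F" if D: "D \<in> G" for D
  proof -
    have "Min D \<in> D" using proper_diagram_Min_Max[OF G D] by blast
    then obtain C where C: "C \<in> F" "Min D \<in> C" using assms(3) D by blast
    then have "C = D" using proper_diagram_disjoint[OF G _ D] assms(2) \<open>Min D \<in> D\<close> by blast
    then show ?thesis using C(1) by simp
  qed
  then show ?thesis using assms(2) by blast
qed

text \<open>If every point strictly between \<open>b\<close> and \<open>c\<close> is matched inside \<open>(b, c)\<close>, then the chords at
  \<open>b\<close> and at \<open>c\<close> both leave the interval and therefore cross, unless they coincide.\<close>

lemma noncrossing_interval_chord:
  assumes G: "proper_diagram G" "nonintersecting G"
    and chords: "{b, d} \<in> G" "{a', c} \<in> G" "b < d" "a' < c" "b < c"
    and inside: "\<And>v. b < v \<Longrightarrow> v < c \<Longrightarrow> v \<in> \<Union>G \<Longrightarrow> \<exists>E\<in>G. v \<in> E \<and> b < Min E \<and> Max E < c"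
  shows "{b, c} \<in> G"
proof (rule ccontr)
  assume "{b, c} \<notin> G"
  then have "d \<noteq> c" "a' \<noteq> b" using chords by auto
  moreover have "\<not> (b < d \<and> d < c)"
  proof
    assume "b < d \<and> d < c"
    then obtain E where "E \<in> G" "d \<in> E" "b < Min E" using inside chords(1) by blast
    then show False using proper_diagram_disjoint[OF G(1) _ chords(1)] chords(3) by fastforce
  qed
  moreover have "\<not> (b < a' \<and> a' < c)"
  proof
    assume "b < a' \<and> a' < c"
    then obtain E where "E \<in> G" "a' \<in> E" "Max E < c" using inside chords(2) by blast
    then show False using proper_diagram_disjoint[OF G(1) _ chords(2)] chords(4) by fastforce
  qed
  ultimately have "a' < b" "c < d" using chords(3-5) by auto
  then show False using nonintersecting_no_cross[OF G(2) chords(2,1)] chords(5) by blast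
qed

text \<open>Look at a shortest chord of \<open>F\<close> missing from \<open>G\<close>.\<close>

lemma noncrossing_eq_if_left_ends_eq:
  assumes F: "proper_diagram F" "nonintersecting F" and G: "proper_diagram G" "nonintersecting G"
    and U: "\<Union>F = \<Union>G" and L: "Min ` F = Min ` G"
  shows "F = G"
proof (rule ccontr)
  assume "F \<noteq> G"
  then have "\<not> F \<subseteq> G" using proper_diagram_subset_eq[OF G(1), of F] U by auto
  then have "F - G \<noteq> {}" by blast
  define len where "len C = Max C - Min C" for C :: "nat set"
  obtain C0 where C0: "C0 \<in> F" "C0 \<notin> G" and shortest: "\<And>C. C \<in> F - G \<Longrightarrow> len C0 \<le> len C"
    using ex_has_least_nat[of "\<lambda>C. C \<in> F - G" _ len] \<open>F - G \<noteq> {}\<close> by blast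
  define b c where "b = Min C0" and "c = Max C0"
  from proper_diagram_Min_Max[OF F(1) C0(1)] have bc: "C0 = {b, c}" "b < c"
    unfolding b_def[symmetric] c_def[symmetric] .
  have inside: "\<exists>E\<in>G. v \<in> E \<and> b < Min E \<and> Max E < c" if v: "b < v" "v < c" "v \<in> \<Union>G" for v
  proof -
    obtain E where E: "E \<in> F" "v \<in> E" using U v(3) by blast
    have nested: "b < Min E \<and> Max E < c"
      using noncrossing_chord_nested[OF F C0(1)[unfolded bc(1)] bc(2) E] v by blast
    then have "len E < len C0"
      using proper_diagram_Min_Max(2)[OF F(1) E(1)] bc unfolding len_def b_def c_def by linarith
    then have "E \<in> G" using shortest E(1) by fastforce
    then show ?thesis using E nested by blast
  qed
  have "b \<in> Min ` G" using L C0(1) b_def by (metis imageI)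
  then obtain D1 where D1: "D1 \<in> G" "Min D1 = b" by (metis imageE)
  define d where "d = Max D1"
  from proper_diagram_Min_Max[OF G(1) D1(1)] have D1_eq: "D1 = {b, d}" "b < d"
    unfolding D1(2) d_def[symmetric] .
  have "c \<in> \<Union>F" using C0(1) bc(1) by blast
  then obtain D2 where D2: "D2 \<in> G" "c \<in> D2" unfolding U by (rule UnionE)
  have "c \<noteq> Min D2"
  proof
    assume "c = Min D2"
    then have "c \<in> Min ` F" using L D2(1) by simp
    then obtain C' where C': "C' \<in> F" "c = Min C'" by (rule imageE)
    then have "c \<in> C'" using proper_diagram_Min_Max(1)[OF F(1) C'(1)] by blast
    then have "C' = C0" using proper_diagram_disjoint[OF F(1) C'(1) C0(1)] bc(1) by blast
    then show False using C'(2) bc(2) b_def by simp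
  qed
  define a' where "a' = Min D2"
  from proper_diagram_Min_Max[OF G(1) D2(1)] have D2': "D2 = {a', Max D2}" "a' < Max D2"
    unfolding a'_def[symmetric] .
  then have "c = Max D2" using D2(2) \<open>c \<noteq> Min D2\<close> a'_def by blast
  with D2' have D2_eq: "D2 = {a', c}" "a' < c" by simp_all
  have "{b, d} \<in> G" "{a', c} \<in> G" using D1(1) D1_eq(1) D2(1) D2_eq(1) by simp_all
  then have "{b, c} \<in> G" using noncrossing_interval_chord[OF G _ _ D1_eq(2) D2_eq(2) bc(2) inside] by blast
  then show False using C0(2) bc(1) by simp
qed

lemma diagram_sign_left_ends:
  assumes F: "proper_diagram F"
  shows "diagram_sign (Min ` F) F = 1"
proof -
  have "chord_sign (Min ` F) C = 1" if C: "C \<in> F" for C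
  proof -
    have Min_in: "Min D \<in> D" if "D \<in> F" for D
      using proper_diagram_Min_Max(1)[OF F that] by blast
    have "x = Min C" if "x \<in> C" "D \<in> F" "x = Min D" for x D
      using proper_diagram_disjoint[OF F C that(2)] that Min_in[OF that(2)] by blast
    then have int: "C \<inter> Min ` F = {Min C}" using Min_in[OF C] C by blast
    moreover have "Max C \<in> C" "Max C \<noteq> Min C"
      using proper_diagram_Min_Max[OF F C] by (blast, simp)
    ultimately show ?thesis unfolding chord_sign_def by auto
  qed
  then show ?thesis unfolding diagram_sign_def by simp
qed

lemma diagram_sign_nonzero_transversal:
  assumes "proper_diagram G" "diagram_sign S G \<noteq> 0" "C \<in> G"
  shows "card (C \<inter> S) = 1"
proof -
  have "finite G" using assms(1) by (simp add: proper_diagram_def)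
  then have "chord_sign S C \<noteq> 0" using assms(2,3) unfolding diagram_sign_def by (simp add: prod_zero_iff)
  then show ?thesis unfolding chord_sign_def by (auto split: if_splits)
qed

text \<open>Unitriangularity: ordering noncrossing diagrams by the sum of their left endpoints, the
  sign functions \<open>diagram_sign (Min ` F0)\<close> vanish on all diagrams after \<open>F0\<close> except \<open>F0\<close> itself.\<close>

lemma diagram_sign_left_ends_delta:
  assumes F0: "proper_diagram F0" "nonintersecting F0" and F: "proper_diagram F" "nonintersecting F"
    and U: "\<Union>F = \<Union>F0" and le: "sum id (Min ` F0) \<le> sum id (Min ` F)"
  shows "diagram_sign (Min ` F0) F = (if F = F0 then 1 else 0)"
proof (cases "F = F0")
  case True then show ?thesis using diagram_sign_left_ends[OF F0(1)] by simp
next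
  case False
  show ?thesis
  proof (rule ccontr)
    assume "diagram_sign (Min ` F0) F \<noteq> (if F = F0 then 1 else 0)"
    then have tr: "\<forall>C\<in>F. card (C \<inter> Min ` F0) = 1"
      using diagram_sign_nonzero_transversal[OF F(1)] False by auto
    have sub: "Min ` F0 \<subseteq> \<Union>F" using U proper_diagram_Min_Max[OF F0(1)] by blast
    have "Min ` F0 = Min ` F"
      using transversal_sum_ge_left_ends[OF F(1) sub tr] le by simp
    then show False using noncrossing_eq_if_left_ends_eq[OF F0 F] U False by simp
  qed
qed

lemma mset_eq_if_diagram_signs_eq:
  assumes P: "\<forall>F \<in># M1 + M2. proper_diagram F \<and> nonintersecting F \<and> \<Union>F = V"
    and L: "\<And>S. (\<Sum>F\<in>#M1. diagram_sign S F) = (\<Sum>F\<in>#M2. diagram_sign S F)"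
  shows "M1 = M2"
proof (rule ccontr)
  assume "M1 \<noteq> M2"
  define N1 N2 I where "N1 = M1 - M2" and "N2 = M2 - M1" and "I = M1 \<inter># M2"
  have M: "M1 = N1 + I" "M2 = N2 + I"
    unfolding N1_def N2_def I_def by (simp_all add: multiset_eq_iff min_def)
  have "N1 + N2 \<noteq> {#}" using M \<open>M1 \<noteq> M2\<close> by auto
  then obtain F1 where "F1 \<in># N1 + N2" by (rule multiset_nonemptyE)
  then obtain F0 where F0: "F0 \<in># N1 + N2"
    and least: "\<And>F. F \<in># N1 + N2 \<Longrightarrow> sum id (Min ` F0) \<le> sum id (Min ` F)"
    using ex_has_least_nat[of "\<lambda>F. F \<in># N1 + N2" F1 "\<lambda>F. sum id (Min ` F)"] by blast
  have PN: "proper_diagram F \<and> nonintersecting F \<and> \<Union>F = V" if "F \<in># N1 + N2" for F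
    using P that unfolding N1_def N2_def by (meson in_diffD union_iff)
  have delta: "diagram_sign (Min ` F0) F = (if F = F0 then 1 else 0)" if "F \<in># N1 + N2" for F
    using diagram_sign_left_ends_delta PN[OF F0] PN[OF that] least[OF that] by metis
  have "(\<Sum>F\<in>#N. diagram_sign (Min ` F0) F) = of_nat (count N F0)" if N: "N \<subseteq># N1 + N2" for N
  proof -
    have "image_mset (diagram_sign (Min ` F0)) N = image_mset (\<lambda>F. if F = F0 then 1 else 0) N"
      using delta mset_subset_eqD[OF N] by (intro image_mset_cong) blast
    then show ?thesis by (simp add: sum_mset_delta)
  qed
  moreover have "(\<Sum>F\<in>#N1. diagram_sign (Min ` F0) F) = (\<Sum>F\<in>#N2. diagram_sign (Min ` F0) F)"
    using L[of "Min ` F0"] unfolding M by simp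
  ultimately have "count N1 F0 = count N2 F0" by simp
  moreover have "count N1 F0 = 0 \<or> count N2 F0 = 0" unfolding N1_def N2_def by auto
  ultimately show False using F0 by (metis count_eq_zero_iff union_iff)
qed

lemma ncd_rel_unique:
  assumes E: "proper_diagram E" and "ncd_rel E M1" "ncd_rel E M2"
  shows "M1 = M2"
proof (rule mset_eq_if_diagram_signs_eq[where V = "\<Union>E"])
  show "\<forall>F\<in>#M1 + M2. proper_diagram F \<and> nonintersecting F \<and> \<Union>F = \<Union>E"
    using ncd_rel_proper[OF _ E] ncd_rel_Union assms(2,3) by (metis union_iff)
  show "(\<Sum>F\<in>#M1. diagram_sign S F) = (\<Sum>F\<in>#M2. diagram_sign S F)" for S
    using ncd_rel_diagram_sign[OF _ E] assms(2,3) by metis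
qed

lemma NCD_eqI:
  assumes "proper_diagram E" "ncd_rel E M"
  shows "NCD E = M"
  unfolding NCD_def using assms(2) by (rule the_equality) (use assms ncd_rel_unique in blast)

lemma crosses_between:
  assumes "crosses C D"
  obtains x y z where "x \<in> D" "y \<in> C" "z \<in> C" "y < x" "x < z"
  using assms unfolding crosses_def by blast

lemma nonintersecting_insert_outside:
  assumes E: "nonintersecting E" and pq: "p < q" and outside: "\<forall>v\<in>\<Union>E. v < p \<or> q < v"
  shows "nonintersecting (insert {p, q} E)"
proof -
  have False if "C \<in> E" "crosses {p, q} C \<or> crosses C {p, q}" for C
  proof -
    have "crosses {p, q} C" using that(2) unfolding crosses_def by blast
    then obtain x y z where "x \<in> C" "y \<in> {p, q}" "z \<in> {p, q}" "y < x" "x < z" by (rule crosses_between)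
    then show False using outside that(1) pq by fastforce
  qed
  moreover have "\<not> crosses {p, q} {p, q}" unfolding crosses_def by (auto simp: doubleton_eq_iff)
  ultimately show ?thesis using E unfolding nonintersecting_def by blast
qed

lemma ncd_rel_insert_outside:
  assumes "ncd_rel E M" "p < q" "\<forall>v\<in>\<Union>E. v < p \<or> q < v"
  shows "ncd_rel (insert {p, q} E) (image_mset (insert {p, q}) M)"
  using assms
proof (induction rule: ncd_rel.induct)
  case (base E)
  then show ?case using ncd_rel.base[OF nonintersecting_insert_outside] by simp
next
  case (expand a c E b d M1 M2)
  let ?s = "{p, q}"
  have "p \<notin> \<Union>E" using expand.prems by fastforce
  then have new: "?s \<noteq> {a, c}" "?s \<noteq> {b, d}" using expand.hyps(1,2) by blast+
  have "\<Union>((E - {{a, c}, {b, d}}) \<union> {{a, b}, {c, d}}) = \<Union>E"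
       "\<Union>((E - {{a, c}, {b, d}}) \<union> {{d, a}, {b, c}}) = \<Union>E"
    using expand.hyps(1,2) by blast+
  then have "ncd_rel ((insert ?s E - {{a, c}, {b, d}}) \<union> {{a, b}, {c, d}}) (image_mset (insert ?s) M1)"
       "ncd_rel ((insert ?s E - {{a, c}, {b, d}}) \<union> {{d, a}, {b, c}}) (image_mset (insert ?s) M2)"
    using expand.IH expand.prems new by (simp_all add: insert_Diff_if insert_commute)
  then show ?case using ncd_rel.expand[of a c "insert ?s E" b d] expand.hyps(1-5) by simp
qed

lemma ncd_rel_expand_rest:
  assumes "a < b" "b < c" "c < d" "{a, c} \<notin> R" "{b, d} \<notin> R"
    and "ncd_rel (insert {a, b} (insert {c, d} R)) M1" "ncd_rel (insert {d, a} (insert {b, c} R)) M2"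
  shows "ncd_rel (insert {a, c} (insert {b, d} R)) (M1 + M2)"
proof (rule ncd_rel.expand)
  have "{a, c} \<noteq> {b, d}" using assms(1-3) by (auto simp: doubleton_eq_iff)
  then have rest: "insert {a, c} (insert {b, d} R) - {{a, c}, {b, d}} = R" using assms(4,5) by auto
  show "ncd_rel ((insert {a, c} (insert {b, d} R) - {{a, c}, {b, d}}) \<union> {{a, b}, {c, d}}) M1"
    unfolding rest using assms(6) by simp
  show "ncd_rel ((insert {a, c} (insert {b, d} R) - {{a, c}, {b, d}}) \<union> {{d, a}, {b, c}}) M2"
    unfolding rest using assms(7) by simp
qed (use assms(1-3) in auto)

definition stat_count :: "(chord_diagram \<Rightarrow> nat) \<Rightarrow> nat \<Rightarrow> chord_diagram multiset \<Rightarrow> nat" where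
  "stat_count st k M = size (filter_mset (\<lambda>F. st F = k) M)"

lemma stat_count_image_mset:
  assumes "\<And>F. F \<in># M \<Longrightarrow> st (f F) = Suc (st F)"
  shows "stat_count st k (image_mset f M) = (if k = 0 then 0 else stat_count st (k - 1) M)"
proof -
  have "filter_mset (\<lambda>F. st (f F) = k) M = filter_mset (\<lambda>F. k \<noteq> 0 \<and> st F = k - 1) M"
    using assms by (intro filter_mset_cong) auto
  then show ?thesis unfolding stat_count_def filter_mset_image_mset by (cases "k = 0") auto
qed

section \<open>0-1 fillings of Young diagrams\<close>

definition row :: "(nat \<times> nat) set \<Rightarrow> nat \<Rightarrow> nat set" where
  "row T r = {c. (r, c) \<in> T}"

definition column :: "(nat \<times> nat) set \<Rightarrow> nat \<Rightarrow> nat set" where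
  "column T c = {r. (r, c) \<in> T}"

text \<open>A filling is the set of cells holding a 1.  The parity \<open>\<pi> r\<close> is imposed on every row \<open>r\<close>,
  so rows without cells need even \<open>\<pi> r\<close>.\<close>

definition fillings :: "(nat \<times> nat) set \<Rightarrow> (nat \<Rightarrow> nat) \<Rightarrow> nat \<Rightarrow> (nat \<times> nat) set set" where
  "fillings S \<pi> k = {T. T \<subseteq> S \<and> (\<forall>c. card (column T c) \<le> 1) \<and>
     (\<forall>r. even (card (row T r) + \<pi> r)) \<and> card T = k}"

lemma finite_row: "finite T \<Longrightarrow> finite (row T r)"
  unfolding row_def by (rule finite_subset[of _ "snd ` T"]) force+

lemma finite_column: "finite T \<Longrightarrow> finite (column T c)"
  unfolding column_def by (rule finite_subset[of _ "fst ` T"]) force+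

lemma finite_fillings: "finite S \<Longrightarrow> finite (fillings S \<pi> k)"
  unfolding fillings_def by (rule finite_subset[of _ "Pow S"]) auto

lemma fillings_parity_cong:
  assumes "\<And>r. even (\<pi> r) = even (\<pi>' r)"
  shows "fillings S \<pi> k = fillings S \<pi>' k"
  unfolding fillings_def using assms by simp

lemma fillings_empty: "fillings {} \<pi> k = (if k = 0 \<and> (\<forall>r. even (\<pi> r)) then {{}} else {})"
  unfolding fillings_def by (auto simp: row_def column_def)

lemma fillings_empty_row:
  assumes "\<And>c. (r, c) \<notin> S"
  shows "fillings S \<pi> k = (if even (\<pi> r) then fillings S (\<pi>(r := 0)) k else {})"
proof -
  have "row T r = {}" if "T \<subseteq> S" for T using assms that unfolding row_def by blast
  then show ?thesis unfolding fillings_def by (auto split: if_splits)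
qed

lemma fillings_without_cell: "{T \<in> fillings S \<pi> k. p \<notin> T} = fillings (S - {p}) \<pi> k"
  unfolding fillings_def by blast

lemma row_insert: "row (insert (r, c) T) r' = (if r' = r then insert c (row T r) else row T r')"
  unfolding row_def by auto

lemma row_remove: "row (T - {(r, c)}) r' = (if r' = r then row T r - {c} else row T r')"
  unfolding row_def by auto

lemma column_insert: "column (insert (r, c) T) c' = (if c' = c then insert r (column T c) else column T c')"
  unfolding column_def by auto

lemma fillings_remove_cell:
  assumes S: "finite S" and T: "T \<in> fillings S \<pi> (Suc k)" "(r, c) \<in> T"
  shows "T - {(r, c)} \<in> fillings {q \<in> S. snd q \<noteq> c} (\<pi>(r := Suc (\<pi> r))) k"
proof -
  have sub: "T \<subseteq> S" and col: "\<And>c'. card (column T c') \<le> 1"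
    and par: "\<And>r'. even (card (row T r') + \<pi> r')" and card: "card T = Suc k"
    using T(1) unfolding fillings_def by auto
  have fin: "finite T" using sub S by (rule finite_subset)
  have "r' = r" if "(r', c) \<in> T" for r'
    using col[of c] card_le_Suc0_iff_eq[OF finite_column[OF fin, of c]] that T(2)
    unfolding column_def by auto
  then have "T - {(r, c)} \<subseteq> {q \<in> S. snd q \<noteq> c}" using sub by force
  moreover have "card (column (T - {(r, c)}) c') \<le> 1" for c'
    using col[of c'] card_mono[OF finite_column[OF fin, of c'], of "column (T - {(r, c)}) c'"]
    unfolding column_def by fastforce
  moreover have "even (card (row (T - {(r, c)}) r') + (\<pi>(r := Suc (\<pi> r))) r')" for r'
  proof -
    have "c \<in> row T r" using T(2) unfolding row_def by simp
    moreover from this have "card (row T r) > 0" using finite_row[OF fin, of r] by (auto simp: card_gt_0_iff)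
    ultimately have "card (row (T - {(r, c)}) r') + (\<pi>(r := Suc (\<pi> r))) r' = card (row T r') + \<pi> r'"
      unfolding row_remove by simp
    then show ?thesis using par[of r'] by simp
  qed
  moreover have "card (T - {(r, c)}) = k" using card T(2) fin by simp
  ultimately show ?thesis unfolding fillings_def by blast
qed

lemma fillings_insert_cell:
  assumes S: "finite S" "(r, c) \<in> S" and T: "T \<in> fillings {q \<in> S. snd q \<noteq> c} (\<pi>(r := Suc (\<pi> r))) k"
  shows "insert (r, c) T \<in> fillings S \<pi> (Suc k)"
proof -
  have sub: "T \<subseteq> {q \<in> S. snd q \<noteq> c}" and col: "\<And>c'. card (column T c') \<le> 1"
    and par: "\<And>r'. even (card (row T r') + (\<pi>(r := Suc (\<pi> r))) r')" and card: "card T = k"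
    using T unfolding fillings_def by auto
  have fin: "finite T" using S(1) by (intro finite_subset[OF sub]) simp
  have "column T c = {}" using sub unfolding column_def by auto
  then have "card (column (insert (r, c) T) c') \<le> 1" for c'
    using col[of c'] unfolding column_insert by simp
  moreover have "even (card (row (insert (r, c) T) r') + \<pi> r')" for r'
  proof -
    have "c \<notin> row T r" using sub unfolding row_def by auto
    then have "card (row (insert (r, c) T) r') + \<pi> r' = card (row T r') + (\<pi>(r := Suc (\<pi> r))) r'"
      using finite_row[OF fin] unfolding row_insert by simp
    then show ?thesis using par[of r'] by simp
  qed
  moreover have "(r, c) \<notin> T" using sub by auto
  then have "card (insert (r, c) T) = Suc k" using card fin by simp
  ultimately show ?thesis using sub S(2) unfolding fillings_def by blast
qed

lemma card_fillings_with_cell: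
  assumes S: "finite S" "(r, c) \<in> S"
  shows "card {T \<in> fillings S \<pi> (Suc k). (r, c) \<in> T}
       = card (fillings {q \<in> S. snd q \<noteq> c} (\<pi>(r := Suc (\<pi> r))) k)"
proof (rule bij_betw_same_card[of "\<lambda>T. T - {(r, c)}"], rule bij_betw_byWitness[of _ "insert (r, c)"])
  show "\<forall>T\<in>{T \<in> fillings S \<pi> (Suc k). (r, c) \<in> T}. insert (r, c) (T - {(r, c)}) = T" by auto
  show "\<forall>T\<in>fillings {q \<in> S. snd q \<noteq> c} (\<pi>(r := Suc (\<pi> r))) k. insert (r, c) T - {(r, c)} = T"
    unfolding fillings_def by auto
  show "(\<lambda>T. T - {(r, c)}) ` {T \<in> fillings S \<pi> (Suc k). (r, c) \<in> T}
      \<subseteq> fillings {q \<in> S. snd q \<noteq> c} (\<pi>(r := Suc (\<pi> r))) k"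
    using fillings_remove_cell[OF S(1)] by blast
  show "insert (r, c) ` fillings {q \<in> S. snd q \<noteq> c} (\<pi>(r := Suc (\<pi> r))) k
      \<subseteq> {T \<in> fillings S \<pi> (Suc k). (r, c) \<in> T}"
    using fillings_insert_cell[OF S] by blast
qed

lemma card_fillings_split:
  assumes "finite S" "(r, c) \<in> S"
  shows "card (fillings S \<pi> k) = card (fillings (S - {(r, c)}) \<pi> k)
           + (if k = 0 then 0 else card (fillings {q \<in> S. snd q \<noteq> c} (\<pi>(r := Suc (\<pi> r))) (k - 1)))"
proof -
  have fin: "finite (fillings S \<pi> k)" using assms(1) by (rule finite_fillings)
  have "fillings S \<pi> k \<inter> {T. (r, c) \<in> T} = {T \<in> fillings S \<pi> k. (r, c) \<in> T}"
       "fillings S \<pi> k - {T. (r, c) \<in> T} = {T \<in> fillings S \<pi> k. (r, c) \<notin> T}" by auto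
  then have "card (fillings S \<pi> k) = card {T \<in> fillings S \<pi> k. (r, c) \<notin> T} + card {T \<in> fillings S \<pi> k. (r, c) \<in> T}"
    using card_Int_Diff[OF fin, of "{T. (r, c) \<in> T}"] by simp
  moreover have "{T \<in> fillings S \<pi> 0. (r, c) \<in> T} = {}"
    using assms(1) unfolding fillings_def by (auto simp: card_eq_0_iff finite_subset)
  ultimately show ?thesis
    using card_fillings_with_cell[OF assms, of \<pi> "k - 1"] unfolding fillings_without_cell
    by (cases k) simp_all
qed

text \<open>The state after processing rows \<open>m, m - 1, \<dots>, i + 1\<close> and the cells of row \<open>i\<close> up to
  column \<open>j\<close>: \<open>D\<close> is the set of columns already holding a 1, and \<open>\<sigma>\<close> the parity of the number
  of ones placed so far in row \<open>i\<close>.\<close>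

definition remaining_cells :: "(nat \<Rightarrow> nat) \<Rightarrow> nat \<Rightarrow> nat \<Rightarrow> nat set \<Rightarrow> (nat \<times> nat) set" where
  "remaining_cells a i j D =
     {(r, c). 1 \<le> r \<and> r < i \<and> 1 \<le> c \<and> c \<le> a r \<and> c \<notin> D} \<union> {(r, c). r = i \<and> 1 \<le> i \<and> j < c \<and> c \<le> a i \<and> c \<notin> D}"

definition row_parity :: "(nat \<Rightarrow> nat) \<Rightarrow> nat \<Rightarrow> nat \<Rightarrow> nat \<Rightarrow> nat" where
  "row_parity \<epsilon> i \<sigma> r = (if 1 \<le> r \<and> r < i then \<epsilon> r else if 1 \<le> r \<and> r = i then \<epsilon> i + \<sigma> else 0)"

definition young_count :: "(nat \<Rightarrow> nat) \<Rightarrow> (nat \<Rightarrow> nat) \<Rightarrow> nat \<Rightarrow> nat \<Rightarrow> nat \<Rightarrow> nat set \<Rightarrow> nat \<Rightarrow> nat" where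
  "young_count a \<epsilon> i j \<sigma> D k = card (fillings (remaining_cells a i j D) (row_parity \<epsilon> i \<sigma>) k)"

lemma finite_remaining_cells: "finite (remaining_cells a i j D)"
  unfolding remaining_cells_def
  by (rule finite_subset[of _ "(SIGMA r:{..i}. {..a r})"]) auto

lemma young_count_no_rows: "young_count a \<epsilon> 0 j \<sigma> D k = (if k = 0 then 1 else 0)"
proof -
  have "remaining_cells a 0 j D = {}" "row_parity \<epsilon> 0 \<sigma> = (\<lambda>_. 0)"
    unfolding remaining_cells_def row_parity_def by auto
  then show ?thesis unfolding young_count_def by (simp add: fillings_empty)
qed

lemma young_count_next_cell:
  assumes i: "1 \<le> i" and c: "j < c" "c \<le> a i" "c \<notin> D" and gap: "\<And>d. j < d \<Longrightarrow> d < c \<Longrightarrow> d \<in> D"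
    and \<sigma>: "\<sigma> \<le> 1"
  shows "young_count a \<epsilon> i j \<sigma> D k = young_count a \<epsilon> i c \<sigma> D k
           + (if k = 0 then 0 else young_count a \<epsilon> i c (1 - \<sigma>) (insert c D) (k - 1))"
proof -
  have cell: "(i, c) \<in> remaining_cells a i j D" using i c unfolding remaining_cells_def by auto
  have "remaining_cells a i j D - {(i, c)} = remaining_cells a i c D"
    using gap c unfolding remaining_cells_def by (auto simp: not_less_iff_gr_or_eq) (meson not_less_iff_gr_or_eq)
  moreover have "{q \<in> remaining_cells a i j D. snd q \<noteq> c} = remaining_cells a i c (insert c D)"
    using gap c unfolding remaining_cells_def by (auto simp: not_less_iff_gr_or_eq) (meson not_less_iff_gr_or_eq)
  moreover have "fillings S ((row_parity \<epsilon> i \<sigma>)(i := Suc (row_parity \<epsilon> i \<sigma> i))) k'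
      = fillings S (row_parity \<epsilon> i (1 - \<sigma>)) k'" for S k'
    using i \<sigma> by (intro fillings_parity_cong) (auto simp: row_parity_def)
  ultimately show ?thesis
    unfolding young_count_def card_fillings_split[OF finite_remaining_cells cell] by simp
qed

lemma young_count_row_end:
  assumes "1 \<le> i"
  shows "young_count a \<epsilon> i (a i) \<sigma> D k = (if even (\<epsilon> i + \<sigma>) then young_count a \<epsilon> (i - 1) 0 0 D k else 0)"
proof -
  have cells: "remaining_cells a i (a i) D = remaining_cells a (i - 1) 0 D"
    using assms unfolding remaining_cells_def by (cases i) (auto simp: less_Suc_eq)
  have "(i, c) \<notin> remaining_cells a i (a i) D" for c unfolding remaining_cells_def by auto
  then have "young_count a \<epsilon> i (a i) \<sigma> D k = card (if even (row_parity \<epsilon> i \<sigma> i)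
      then fillings (remaining_cells a i (a i) D) ((row_parity \<epsilon> i \<sigma>)(i := 0)) k else {})"
    unfolding young_count_def by (subst fillings_empty_row) auto
  moreover have "(row_parity \<epsilon> i \<sigma>)(i := 0) = row_parity \<epsilon> (i - 1) 0" "row_parity \<epsilon> i \<sigma> i = \<epsilon> i + \<sigma>"
    using assms unfolding row_parity_def by (auto simp: fun_eq_iff)
  ultimately show ?thesis unfolding young_count_def cells by simp
qed

lemma young_count_last_cell:
  assumes i: "1 \<le> i" and j: "j < a i" "a i \<notin> D" and gap: "\<And>c. j < c \<Longrightarrow> c < a i \<Longrightarrow> c \<in> D"
    and \<sigma>: "\<sigma> \<le> 1"
  shows "young_count a \<epsilon> i j \<sigma> D k = (if even (\<epsilon> i + \<sigma>) then young_count a \<epsilon> (i - 1) 0 0 D k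
           else if k = 0 then 0 else young_count a \<epsilon> (i - 1) 0 0 (insert (a i) D) (k - 1))"
proof -
  have "young_count a \<epsilon> i j \<sigma> D k = young_count a \<epsilon> i (a i) \<sigma> D k
      + (if k = 0 then 0 else young_count a \<epsilon> i (a i) (1 - \<sigma>) (insert (a i) D) (k - 1))"
    by (rule young_count_next_cell) (use i j gap \<sigma> in auto)
  moreover have "\<sigma> = 0 \<or> \<sigma> = 1" using \<sigma> by auto
  ultimately show ?thesis unfolding young_count_row_end[OF i] by auto
qed

lemma g_count_eq_young_count:
  assumes "0 < m"
  shows "g_count m a \<epsilon> k = young_count a \<epsilon> m 0 0 {} k"
proof -
  define Y where "Y = {M \<in> young01 m a. (\<forall>j. card {i \<in> {1..m}. M (i, j)} \<le> 1) \<and>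
      (\<forall>i \<in> {1..m}. card {j \<in> {1..a i}. M (i, j)} mod 2 = \<epsilon> i mod 2) \<and> card {p. M p} = k}"
  have cells: "remaining_cells a m 0 {} = {(i, j). i \<in> {1..m} \<and> j \<in> {1..a i}}"
    using assms unfolding remaining_cells_def by (auto simp: le_less)
  have "bij_betw (\<lambda>M. {p. M p}) Y (fillings (remaining_cells a m 0 {}) (row_parity \<epsilon> m 0) k)"
  proof (rule bij_betw_byWitness[of _ "\<lambda>T p. p \<in> T"])
    show "\<forall>M\<in>Y. (\<lambda>p. p \<in> {p. M p}) = M" by simp
    show "\<forall>T\<in>fillings (remaining_cells a m 0 {}) (row_parity \<epsilon> m 0) k. {p. p \<in> T} = T" by simp
    have support: "{p. M p} \<subseteq> remaining_cells a m 0 {} \<longleftrightarrow> M \<in> young01 m a" for M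
      unfolding cells young01_def by auto
    have col: "{i \<in> {1..m}. M (i, j)} = column {p. M p} j" if "M \<in> young01 m a" for M j
      using that unfolding young01_def column_def by auto
    have row: "{j \<in> {1..a i}. M (i, j)} = row {p. M p} i" if "M \<in> young01 m a" for M i
      using that unfolding young01_def row_def by auto
    have out: "row {p. M p} r = {}" if "M \<in> young01 m a" "r \<notin> {1..m}" for M r
      using that unfolding young01_def row_def by auto
    have par: "(\<forall>i \<in> {1..m}. card {j \<in> {1..a i}. M (i, j)} mod 2 = \<epsilon> i mod 2)
        \<longleftrightarrow> (\<forall>r. even (card (row {p. M p} r) + row_parity \<epsilon> m 0 r))" if "M \<in> young01 m a" for M
    proof -
      have "row_parity \<epsilon> m 0 r = (if r \<in> {1..m} then \<epsilon> r else 0)" for r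
        unfolding row_parity_def by auto
      moreover have "x mod 2 = y mod 2 \<longleftrightarrow> even (x + y)" for x y :: nat by presburger
      ultimately show ?thesis unfolding row[OF that] using out[OF that] by (metis add_0 card.empty even_zero)
    qed
    show "(\<lambda>M. {p. M p}) ` Y \<subseteq> fillings (remaining_cells a m 0 {}) (row_parity \<epsilon> m 0) k"
      unfolding Y_def fillings_def using support col par by auto
    show "(\<lambda>T p. p \<in> T) ` fillings (remaining_cells a m 0 {}) (row_parity \<epsilon> m 0) k \<subseteq> Y"
    proof clarify
      fix T assume T: "T \<in> fillings (remaining_cells a m 0 {}) (row_parity \<epsilon> m 0) k"
      define M where "M = (\<lambda>p. p \<in> T)"
      have MT: "{p. M p} = T" unfolding M_def by simp
      then have M: "M \<in> young01 m a" using support[of M] T unfolding fillings_def by auto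
      show "M \<in> Y" unfolding Y_def using T col[OF M] par[OF M] M by (auto simp: MT fillings_def)
    qed
  qed
  then show ?thesis unfolding g_count_def young_count_def Y_def by (rule bij_betw_same_card)
qed

lemma e_count_insert:
  assumes "finite F" "s \<notin> F"
  shows "e_count (insert s F) U = e_count F U + (if s \<subseteq> U then 1 else 0)"
proof -
  have "{C \<in> insert s F. C \<subseteq> U} = (if s \<subseteq> U then insert s {C \<in> F. C \<subseteq> U} else {C \<in> F. C \<subseteq> U})"
    by auto
  then show ?thesis unfolding e_count_def using assms by simp
qed

lemma crosses_pairsD:
  assumes "p < q" "r < s" "crosses {p,q} {r,s}"
  shows "(p < r \<and> r < q \<and> q < s) \<or> (r < p \<and> p < s \<and> s < q)"
proof -
  obtain a b c d where abcd: "a < b" "b < c" "c < d" "({p,q} = {a, c} \<and> {r,s} = {b, d}) \<or> ({p,q} = {b, d} \<and> {r,s} = {a, c})"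
    using assms(3) unfolding crosses_def by blast
  show ?thesis using abcd(4)
  proof
    assume h: "{p,q} = {a, c} \<and> {r,s} = {b, d}"
    then have "p = a" "q = c" "r = b" "s = d" using assms(1,2) abcd(1-3) by (auto simp: doubleton_eq_iff)
    then show ?thesis using abcd(1-3) by simp
  next
    assume h: "{p,q} = {b, d} \<and> {r,s} = {a, c}"
    then have "p = b" "q = d" "r = a" "s = c" using assms(1,2) abcd(1-3) by (auto simp: doubleton_eq_iff)
    then show ?thesis using abcd(1-3) by simp
  qed
qed

section \<open>Expanding the diagram row by row\<close>

definition rungs :: "nat set \<Rightarrow> (nat \<Rightarrow> nat) \<Rightarrow> (nat \<Rightarrow> nat) \<Rightarrow> chord_diagram" where
  "rungs C zp yp = {{zp c, yp c} | c. c \<in> C}"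

lemma rungs_iff: "X \<in> rungs C zp yp \<longleftrightarrow> (\<exists>c\<in>C. X = {zp c, yp c})"
  unfolding rungs_def by blast

lemma nonintersecting_rungs:
  assumes "\<forall>c\<in>C. \<forall>c'\<in>C. c < c' \<longrightarrow> zp c < zp c' \<and> yp c' < yp c" "\<forall>c\<in>C. zp c < yp c"
  shows "nonintersecting (rungs C zp yp)"
  unfolding nonintersecting_def
proof (rule notI)
  assume "\<exists>X\<in>rungs C zp yp. \<exists>Y\<in>rungs C zp yp. crosses X Y"
  then obtain X Y where XY: "X \<in> rungs C zp yp" "Y \<in> rungs C zp yp" "crosses X Y" by blast
  obtain c where c1: "c \<in> C" "X = {zp c, yp c}" using XY(1) unfolding rungs_iff by blast
  obtain c' where c2: "c' \<in> C" "Y = {zp c', yp c'}" using XY(2) unfolding rungs_iff by blast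
  have c: "c \<in> C" "c' \<in> C" using c1 c2 by auto
  have cr: "crosses {zp c, yp c} {zp c', yp c'}" using XY(3) c1 c2 by simp
  have l: "zp c < yp c" "zp c' < yp c'" using assms(2) c by auto
  have h: "(zp c < zp c' \<and> zp c' < yp c \<and> yp c < yp c') \<or> (zp c' < zp c \<and> zp c < yp c' \<and> yp c' < yp c)"
    using crosses_pairsD[OF l cr] .
  consider "c < c'" | "c = c'" | "c' < c" by fastforce
  then show False
  proof cases
    case 1 then show False using assms(1) c h by force
  next
    case 2 then show False using h by auto
  next
    case 3 then show False using assms(1) c h by force
  qed
qed


context
  fixes m n :: nat and a \<epsilon> :: "nat \<Rightarrow> nat"
  assumes m_pos: "0 < m" and a1: "a 1 = n" and adec: "\<And>i. 1 \<le> i \<Longrightarrow> i < m \<Longrightarrow> a (i+1) < a i"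
      and am: "1 \<le> a m" and eps01: "\<And>i. i \<in> {1..m} \<Longrightarrow> \<epsilon> i \<in> {0,1}"
begin

lemma a_strict_mono: "1 \<le> i \<Longrightarrow> i < k \<Longrightarrow> k \<le> m \<Longrightarrow> a k < a i"
proof (induction k)
  case 0 then show ?case by simp
next
  case (Suc k)
  show ?case
  proof (cases "i = k")
    case True then show ?thesis using adec[of k] Suc.prems by simp
  next
    case False
    then have "a k < a i" using Suc by simp
    moreover have "a (k+1) < a k" using adec[of k] Suc.prems False by simp
    ultimately show ?thesis by simp
  qed
qed

lemma a_le_n: "1 \<le> i \<Longrightarrow> i \<le> m \<Longrightarrow> a i \<le> n"
  using a_strict_mono[of 1 i] a1 by (cases "i = 1") auto

lemma a_ge1: "1 \<le> i \<Longrightarrow> i \<le> m \<Longrightarrow> 1 \<le> a i"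
  using a_strict_mono[of i m] am by (cases "i = m") auto

lemma a_inj: "1 \<le> i \<Longrightarrow> i \<le> m \<Longrightarrow> 1 \<le> k \<Longrightarrow> k \<le> m \<Longrightarrow> a i = a k \<Longrightarrow> i = k"
  using a_strict_mono[of i k] a_strict_mono[of k i] by (metis less_irrefl nat_neq_iff)

definition partner :: "nat \<Rightarrow> nat" where "partner k = (if \<epsilon> k = 0 then m + 2*n + 1 - a k else m + a k)"

definition open_cols :: "nat \<Rightarrow> nat set \<Rightarrow> nat set" where
  "open_cols i D = {c. 1 \<le> c \<and> c \<le> n \<and> c \<notin> D \<and> c \<notin> a ` {1..i}}"

text \<open>While row \<open>i\<close> is processed, the diagram consists of the untouched chords of the rows \<open>k < i\<close>,
  the chord from the current endpoint \<open>u\<close> to \<open>partner i\<close>, and one rung \<open>{zp c, yp c}\<close> for every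
  open column \<open>c\<close>.  In \<open>state_inv\<close>, columns up to \<open>j\<close> have been swept, and \<open>\<sigma>\<close> records whether \<open>u\<close>
  lies in \<open>X \<union> Z\<close> (\<open>\<sigma> = 0\<close>) or in \<open>Y\<close> (\<open>\<sigma> = 1\<close>).\<close>

definition pending :: "nat \<Rightarrow> chord_diagram" where
  "pending i = {{k, partner k} | k. 1 \<le> k \<and> k < i}"

definition diagram :: "nat \<Rightarrow> nat \<Rightarrow> nat set \<Rightarrow> (nat \<Rightarrow> nat) \<Rightarrow> (nat \<Rightarrow> nat) \<Rightarrow> chord_diagram" where
  "diagram i u D zp yp = pending i \<union> (if 1 \<le> i then {{u, partner i}} else {}) \<union> rungs (open_cols i D) zp yp"

definition stat :: "chord_diagram \<Rightarrow> nat" where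
  "stat F = e_count F (Yset m n) + e_count F (Xset m n \<union> Zset m n)"

lemma Xset_Un_Zset: "Xset m n \<union> Zset m n = {1..m+n}"
proof -
  have "Xset m n = {1..m}" unfolding Xset_def xpt_def by simp
  moreover have "Zset m n = {m+1..m+n}"
  proof
    show "Zset m n \<subseteq> {m+1..m+n}" unfolding Zset_def zpt_def by auto
    show "{m+1..m+n} \<subseteq> Zset m n"
    proof
      fix x assume "x \<in> {m+1..m+n}"
      then have "x = m + (x - m)" "x - m \<in> {1..n}" by auto
      then show "x \<in> Zset m n" unfolding Zset_def zpt_def by blast
    qed
  qed
  ultimately show ?thesis by auto
qed

lemma Yset_eq: "Yset m n = {m+n+1..m+2*n}"
proof
  show "Yset m n \<subseteq> {m+n+1..m+2*n}" unfolding Yset_def ypt_def by auto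
  show "{m+n+1..m+2*n} \<subseteq> Yset m n"
  proof
    fix x assume x: "x \<in> {m+n+1..m+2*n}"
    then have "x = m + 2*n + 1 - (m + 2*n + 1 - x)" "m + 2*n + 1 - x \<in> {1..n}" by auto
    then show "x \<in> Yset m n" unfolding Yset_def ypt_def by blast
  qed
qed

lemma stat_insert:
  assumes "finite F" "s \<notin> F" "s \<noteq> {}" "s \<subseteq> {1..m+n} \<or> s \<subseteq> {m+n+1..m+2*n}"
  shows "stat (insert s F) = Suc (stat F)"
proof -
  have "\<not> (s \<subseteq> {1..m+n} \<and> s \<subseteq> {m+n+1..m+2*n})"
  proof
    assume h: "s \<subseteq> {1..m+n} \<and> s \<subseteq> {m+n+1..m+2*n}"
    obtain x where "x \<in> s" using assms(3) by blast
    then have "x \<le> m + n" "m + n + 1 \<le> x" using h by auto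
    then show False by simp
  qed
  then show ?thesis unfolding stat_def Xset_Un_Zset Yset_eq using e_count_insert[OF assms(1,2)] assms(4) by auto
qed

lemma stat_rungs:
  assumes "\<forall>c\<in>C. zp c \<le> m + n \<and> m + n < yp c"
  shows "stat (rungs C zp yp) = 0"
proof -
  have "{X \<in> rungs C zp yp. X \<subseteq> {m+n+1..m+2*n}} = {}" using assms unfolding rungs_iff by fastforce
  moreover have "{X \<in> rungs C zp yp. X \<subseteq> {1..m+n}} = {}" using assms unfolding rungs_iff by fastforce
  ultimately show ?thesis unfolding stat_def Xset_Un_Zset Yset_eq e_count_def by simp
qed


definition state_inv :: "nat \<Rightarrow> nat \<Rightarrow> nat \<Rightarrow> nat set \<Rightarrow> nat \<Rightarrow> (nat \<Rightarrow> nat) \<Rightarrow> (nat \<Rightarrow> nat) \<Rightarrow> bool" where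
 "state_inv i j \<sigma> D u zp yp \<longleftrightarrow>
   i \<le> m \<and> D \<subseteq> {1..n} \<and>
   (\<forall>c\<in>open_cols i D. \<forall>c'\<in>open_cols i D. c < c' \<longrightarrow> zp c < zp c' \<and> yp c' < yp c) \<and>
   (\<forall>c\<in>open_cols i D. i \<le> zp c \<and> 1 \<le> zp c \<and> zp c \<le> m + n \<and> m + n < yp c \<and> yp c \<le> m + 2*n) \<and>
   (1 \<le> i \<longrightarrow> j < a i \<and> D \<subseteq> {..<a i} \<and> \<sigma> \<le> 1 \<and>
     (\<forall>c\<in>open_cols i D. c < a i \<longrightarrow> zp c \<le> m + c \<and> m + 2*n + 1 - c \<le> yp c) \<and>
     (\<forall>c\<in>open_cols i D. a i < c \<longrightarrow> zp c = m + c \<and> yp c = m + 2*n + 1 - c) \<and>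
     (\<sigma> = 0 \<longrightarrow> i \<le> u \<and> u < m + a i \<and> (\<forall>c\<in>open_cols i D. (c \<le> j \<longrightarrow> zp c < u) \<and> (j < c \<longrightarrow> u < zp c))) \<and>
     (\<sigma> = 1 \<longrightarrow> m + 2*n + 1 - a i < u \<and> u \<le> m + 2*n \<and> (\<forall>c\<in>open_cols i D. (c \<le> j \<longrightarrow> u < yp c) \<and> (j < c \<longrightarrow> yp c < u))))"

lemma open_cols_iff: "c \<in> open_cols i D \<longleftrightarrow> 1 \<le> c \<and> c \<le> n \<and> c \<notin> D \<and> (\<forall>k. 1 \<le> k \<and> k \<le> i \<longrightarrow> c \<noteq> a k)"
  unfolding open_cols_def by auto

lemma Union_pending: "x \<in> \<Union>(pending i) \<longleftrightarrow> (\<exists>k. 1 \<le> k \<and> k < i \<and> (x = k \<or> x = partner k))"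
  unfolding pending_def by blast

lemma Union_rungs: "x \<in> \<Union>(rungs C zp yp) \<longleftrightarrow> (\<exists>c\<in>C. x = zp c \<or> x = yp c)"
  unfolding rungs_def by blast

lemma diagram_pos: "1 \<le> i \<Longrightarrow> diagram i u D zp yp = pending i \<union> {{u, partner i}} \<union> rungs (open_cols i D) zp yp"
  unfolding diagram_def by simp

lemma diagram_zero: "diagram 0 u D zp yp = rungs (open_cols 0 D) zp yp"
  unfolding diagram_def pending_def by simp

lemma pending_Suc: "1 \<le> i \<Longrightarrow> pending i \<union> {{i, partner i}} = pending (Suc i)"
  unfolding pending_def by (auto simp: less_Suc_eq)

lemma diagram_prev: "1 \<le> i \<Longrightarrow> diagram (i - 1) (i - 1) D zp yp = pending i \<union> rungs (open_cols (i - 1) D) zp yp"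
proof -
  assume i: "1 \<le> i"
  show ?thesis
  proof (cases "i = 1")
    case True
    have "pending 1 = {}" "pending 0 = {}" unfolding pending_def by auto
    then show ?thesis using True unfolding diagram_def by simp
  next
    case False
    then have "1 \<le> i - 1" using i by simp
    moreover have "pending (i - 1) \<union> {{i - 1, partner (i - 1)}} = pending i" using pending_Suc[of "i - 1"] False i by simp
    ultimately show ?thesis unfolding diagram_def by auto
  qed
qed

lemma rungs_remove: "c0 \<in> C \<Longrightarrow> rungs C zp yp = insert {zp c0, yp c0} (rungs (C - {c0}) zp yp)"
  unfolding rungs_def by blast

lemma rungs_upd_z: "c0 \<in> C \<Longrightarrow> rungs C (zp(c0 := v)) yp = insert {v, yp c0} (rungs (C - {c0}) zp yp)"
  unfolding rungs_def by auto

lemma rungs_upd_y: "c0 \<in> C \<Longrightarrow> rungs C zp (yp(c0 := v)) = insert {zp c0, v} (rungs (C - {c0}) zp yp)"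
  unfolding rungs_def by auto

lemma rungs_insert_upd: "c0 \<notin> C \<Longrightarrow> rungs (insert c0 C) (zp(c0 := v)) (yp(c0 := w)) = insert {v, w} (rungs C zp yp)"
  unfolding rungs_def by auto

lemma eps_cases: "1 \<le> k \<Longrightarrow> k \<le> m \<Longrightarrow> \<epsilon> k = 0 \<or> \<epsilon> k = 1"
  using eps01[of k] by auto

lemma open_cols_ne_a: "c \<in> open_cols i D \<Longrightarrow> 1 \<le> k \<Longrightarrow> k \<le> i \<Longrightarrow> c \<noteq> a k"
  unfolding open_cols_iff by blast

lemma open_cols_insert: "open_cols i (insert c0 D) = open_cols i D - {c0}"
  unfolding open_cols_def by auto


lemma state_invD:
  assumes "state_inv i j \<sigma> D u zp yp" "1 \<le> i"
  shows "i \<le> m" "D \<subseteq> {1..n}"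
    "\<And>c c'. c \<in> open_cols i D \<Longrightarrow> c' \<in> open_cols i D \<Longrightarrow> c < c' \<Longrightarrow> zp c < zp c' \<and> yp c' < yp c"
    "\<And>c. c \<in> open_cols i D \<Longrightarrow> i \<le> zp c \<and> 1 \<le> zp c \<and> zp c \<le> m + n \<and> m + n < yp c \<and> yp c \<le> m + 2*n"
    "j < a i" "D \<subseteq> {..<a i}" "\<sigma> \<le> 1"
    "\<And>c. c \<in> open_cols i D \<Longrightarrow> c < a i \<Longrightarrow> zp c \<le> m + c \<and> m + 2*n + 1 - c \<le> yp c"
    "\<And>c. c \<in> open_cols i D \<Longrightarrow> a i < c \<Longrightarrow> zp c = m + c \<and> yp c = m + 2*n + 1 - c"
    "\<sigma> = 0 \<Longrightarrow> i \<le> u \<and> u < m + a i"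
    "\<And>c. \<sigma> = 0 \<Longrightarrow> c \<in> open_cols i D \<Longrightarrow> (c \<le> j \<longrightarrow> zp c < u) \<and> (j < c \<longrightarrow> u < zp c)"
    "\<sigma> = 1 \<Longrightarrow> m + 2*n + 1 - a i < u \<and> u \<le> m + 2*n"
    "\<And>c. \<sigma> = 1 \<Longrightarrow> c \<in> open_cols i D \<Longrightarrow> (c \<le> j \<longrightarrow> u < yp c) \<and> (j < c \<longrightarrow> yp c < u)"
  using assms unfolding state_inv_def by blast+

lemma pending_facts:
  assumes "1 \<le> k" "k < i" "i \<le> m"
  shows "\<epsilon> k = 0 \<Longrightarrow> m + n < partner k \<and> partner k < m + 2*n + 1 - a i"
        "\<epsilon> k \<noteq> 0 \<Longrightarrow> m + a i < partner k \<and> partner k \<le> m + n"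
proof -
  have aki: "a i < a k" using a_strict_mono[of k i] assms by simp
  have akn: "a k \<le> n" using a_le_n[of k] assms by simp
  show "\<epsilon> k = 0 \<Longrightarrow> m + n < partner k \<and> partner k < m + 2*n + 1 - a i" using aki akn unfolding partner_def by simp arith
  show "\<epsilon> k \<noteq> 0 \<Longrightarrow> m + a i < partner k \<and> partner k \<le> m + n" using aki akn unfolding partner_def by simp
qed

lemma Union_pending_bounds:
  assumes "v \<in> \<Union>(pending i)" "i \<le> m"
  shows "v < i \<or> (m + a i < v \<and> v \<le> m + n) \<or> (m + n < v \<and> v < m + 2*n + 1 - a i)"
proof -
  obtain k where k: "1 \<le> k" "k < i" "v = k \<or> v = partner k"
    using assms(1) unfolding Union_pending by blast
  then show ?thesis using pending_facts[OF k(1,2) assms(2)] by (cases "\<epsilon> k = 0") auto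
qed

lemma partner_facts:
  assumes "1 \<le> i" "i \<le> m"
  shows "\<epsilon> i = 0 \<Longrightarrow> partner i = m + 2*n + 1 - a i \<and> m + n < partner i \<and> partner i \<le> m + 2*n"
        "\<epsilon> i \<noteq> 0 \<Longrightarrow> partner i = m + a i \<and> m < partner i \<and> partner i \<le> m + n"
  using a_le_n[of i] a_ge1[of i] assms unfolding partner_def by auto

lemma next_col_facts:
  assumes V: "state_inv i j \<sigma> D u zp yp" and i1: "1 \<le> i" and c0: "j < c0" "c0 < a i" "c0 \<notin> D"
    and c0min: "\<forall>c. j < c \<and> c < a i \<and> c \<notin> D \<longrightarrow> c0 \<le> c"
  shows "c0 \<in> open_cols i D" "\<And>c. c \<in> open_cols i D \<Longrightarrow> c < c0 \<Longrightarrow> c \<le> j" "\<And>c. c \<in> open_cols i D \<Longrightarrow> j < c \<Longrightarrow> c0 \<le> c"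
proof -
  have im: "i \<le> m" using state_invD(1)[OF V i1] .
  have "a i \<le> n" using a_le_n[OF i1 im] .
  moreover have "\<And>k. 1 \<le> k \<Longrightarrow> k \<le> i \<Longrightarrow> c0 \<noteq> a k"
  proof -
    fix k assume k: "1 \<le> k" "k \<le> i"
    have "a i \<le> a k" using a_strict_mono[of k i] k im by (cases "k = i") auto
    then show "c0 \<noteq> a k" using c0(2) by simp
  qed
  ultimately show "c0 \<in> open_cols i D" unfolding open_cols_iff using c0 by auto
  show "\<And>c. c \<in> open_cols i D \<Longrightarrow> c < c0 \<Longrightarrow> c \<le> j"
  proof -
    fix c assume c: "c \<in> open_cols i D" "c < c0"
    show "c \<le> j"
    proof (rule ccontr)
      assume "\<not> c \<le> j"
      then have "j < c \<and> c < a i \<and> c \<notin> D" using c c0(2) unfolding open_cols_iff by auto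
      then have "c0 \<le> c" using c0min by blast
      then show False using c(2) by simp
    qed
  qed
  show "\<And>c. c \<in> open_cols i D \<Longrightarrow> j < c \<Longrightarrow> c0 \<le> c"
  proof -
    fix c assume c: "c \<in> open_cols i D" "j < c"
    show "c0 \<le> c"
    proof (rule ccontr)
      assume "\<not> c0 \<le> c"
      then have "j < c \<and> c < a i \<and> c \<notin> D" using c c0(2) unfolding open_cols_iff by auto
      then have "c0 \<le> c" using c0min by blast
      then show False using \<open>\<not> c0 \<le> c\<close> by simp
    qed
  qed
qed

lemma state_invI_xz:
  assumes "1 \<le> i" "i \<le> m" "D \<subseteq> {1..n}"
    "\<forall>c\<in>open_cols i D. \<forall>c'\<in>open_cols i D. c < c' \<longrightarrow> zp c < zp c' \<and> yp c' < yp c"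
    "\<forall>c\<in>open_cols i D. i \<le> zp c \<and> 1 \<le> zp c \<and> zp c \<le> m + n \<and> m + n < yp c \<and> yp c \<le> m + 2*n"
    "j < a i" "D \<subseteq> {..<a i}"
    "\<forall>c\<in>open_cols i D. c < a i \<longrightarrow> zp c \<le> m + c \<and> m + 2*n + 1 - c \<le> yp c"
    "\<forall>c\<in>open_cols i D. a i < c \<longrightarrow> zp c = m + c \<and> yp c = m + 2*n + 1 - c"
    "i \<le> u \<and> u < m + a i \<and> (\<forall>c\<in>open_cols i D. (c \<le> j \<longrightarrow> zp c < u) \<and> (j < c \<longrightarrow> u < zp c))"
  shows "state_inv i j 0 D u zp yp"
  using assms unfolding state_inv_def by simp

lemma state_invI_y:
  assumes "1 \<le> i" "i \<le> m" "D \<subseteq> {1..n}"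
    "\<forall>c\<in>open_cols i D. \<forall>c'\<in>open_cols i D. c < c' \<longrightarrow> zp c < zp c' \<and> yp c' < yp c"
    "\<forall>c\<in>open_cols i D. i \<le> zp c \<and> 1 \<le> zp c \<and> zp c \<le> m + n \<and> m + n < yp c \<and> yp c \<le> m + 2*n"
    "j < a i" "D \<subseteq> {..<a i}"
    "\<forall>c\<in>open_cols i D. c < a i \<longrightarrow> zp c \<le> m + c \<and> m + 2*n + 1 - c \<le> yp c"
    "\<forall>c\<in>open_cols i D. a i < c \<longrightarrow> zp c = m + c \<and> yp c = m + 2*n + 1 - c"
    "m + 2*n + 1 - a i < u \<and> u \<le> m + 2*n \<and> (\<forall>c\<in>open_cols i D. (c \<le> j \<longrightarrow> u < yp c) \<and> (j < c \<longrightarrow> yp c < u))"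
  shows "state_inv i j 1 D u zp yp"
  using assms unfolding state_inv_def by simp

lemma state_invI_0:
  assumes "D \<subseteq> {1..n}"
    "\<forall>c\<in>open_cols 0 D. \<forall>c'\<in>open_cols 0 D. c < c' \<longrightarrow> zp c < zp c' \<and> yp c' < yp c"
    "\<forall>c\<in>open_cols 0 D. 1 \<le> zp c \<and> zp c \<le> m + n \<and> m + n < yp c \<and> yp c \<le> m + 2*n"
  shows "state_inv 0 j \<sigma> D u zp yp"
  using assms unfolding state_inv_def by simp

lemma state_inv_skip_xz:
  assumes V: "state_inv i j 0 D u zp yp" and i1: "1 \<le> i" and c0: "j < c0" "c0 < a i" "c0 \<notin> D"
    and c0min: "\<forall>c. j < c \<and> c < a i \<and> c \<notin> D \<longrightarrow> c0 \<le> c"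
  shows "state_inv i c0 0 D (zp c0) (zp(c0 := u)) yp"
proof -
  note F = state_invD[OF V i1]
  note CF = next_col_facts[OF V i1 c0 c0min]
  have left: "zp c < u" if "c \<in> open_cols i D" "c < c0" for c using F(11)[OF _ that(1)] CF(2)[OF that] by simp
  have right: "u < zp c" if "c \<in> open_cols i D" "c0 < c" for c using F(11)[OF _ that(1)] c0(1) that(2) by simp
  have u: "i \<le> u" "u < zp c0" "zp c0 \<le> m + c0" using F(10) right[OF CF(1)] F(11)[OF _ CF(1)] c0(1) F(8)[OF CF(1) c0(2)] by auto
  show ?thesis
  proof (rule state_invI_xz[OF i1 F(1) F(2) _ _ c0(2) F(6)])
    show "\<forall>c\<in>open_cols i D. \<forall>c'\<in>open_cols i D. c < c' \<longrightarrow> (zp(c0 := u)) c < (zp(c0 := u)) c' \<and> yp c' < yp c"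
      using F(3) left right by fastforce
    show "\<forall>c\<in>open_cols i D. i \<le> (zp(c0 := u)) c \<and> 1 \<le> (zp(c0 := u)) c \<and> (zp(c0 := u)) c \<le> m + n
        \<and> m + n < yp c \<and> yp c \<le> m + 2*n"
      using F(4) u i1 a_le_n[OF i1 F(1)] c0(2) by auto
    show "\<forall>c\<in>open_cols i D. c < a i \<longrightarrow> (zp(c0 := u)) c \<le> m + c \<and> m + 2*n + 1 - c \<le> yp c"
      using F(8) u by auto
    show "\<forall>c\<in>open_cols i D. a i < c \<longrightarrow> (zp(c0 := u)) c = m + c \<and> yp c = m + 2*n + 1 - c"
      using F(9) c0(2) by auto
    show "i \<le> zp c0 \<and> zp c0 < m + a i \<and> (\<forall>c\<in>open_cols i D. (c \<le> c0 \<longrightarrow> (zp(c0 := u)) c < zp c0)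
        \<and> (c0 < c \<longrightarrow> zp c0 < (zp(c0 := u)) c))"
      using F(3)[OF _ CF(1)] F(3)[OF CF(1)] F(4)[OF CF(1)] u c0(2) by (auto simp: le_less)
  qed
qed

lemma state_inv_fill_xz:
  assumes V: "state_inv i j 0 D u zp yp" and i1: "1 \<le> i" and c0: "j < c0" "c0 < a i" "c0 \<notin> D"
    and c0min: "\<forall>c. j < c \<and> c < a i \<and> c \<notin> D \<longrightarrow> c0 \<le> c"
  shows "state_inv i c0 1 (insert c0 D) (yp c0) zp yp"
proof -
  note F = state_invD[OF V i1]
  note CF = next_col_facts[OF V i1 c0 c0min]
  have c0C: "c0 \<in> open_cols i D" by (rule CF(1))
  have cols: "open_cols i (insert c0 D) = open_cols i D - {c0}" using open_cols_insert[of i c0 D] by simp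
  have yb: "m + 2*n + 1 - c0 \<le> yp c0" using F(8)[OF c0C c0(2)] by simp
  have an: "a i \<le> n" using a_le_n[OF i1 F(1)] .
  have c0n: "1 \<le> c0" "c0 \<le> n" using c0C unfolding open_cols_iff by auto
  have D': "insert c0 D \<subseteq> {1..n}" "insert c0 D \<subseteq> {..<a i}" using F(2,6) c0n c0(2) by auto
  have nest: "\<forall>c\<in>open_cols i (insert c0 D). \<forall>c'\<in>open_cols i (insert c0 D). c < c' \<longrightarrow> zp c < zp c' \<and> yp c' < yp c"
    unfolding cols using F(3) by blast
  have range: "\<forall>c\<in>open_cols i (insert c0 D). i \<le> zp c \<and> 1 \<le> zp c \<and> zp c \<le> m + n \<and> m + n < yp c \<and> yp c \<le> m + 2*n"
    unfolding cols using F(4) by blast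
  have inner: "\<forall>c\<in>open_cols i (insert c0 D). c < a i \<longrightarrow> zp c \<le> m + c \<and> m + 2*n + 1 - c \<le> yp c"
    unfolding cols using F(8) by blast
  have outer: "\<forall>c\<in>open_cols i (insert c0 D). a i < c \<longrightarrow> zp c = m + c \<and> yp c = m + 2*n + 1 - c"
    unfolding cols using F(9) by blast
  have cursor: "m + 2*n + 1 - a i < yp c0 \<and> yp c0 \<le> m + 2*n \<and> (\<forall>c\<in>open_cols i (insert c0 D). (c \<le> c0 \<longrightarrow> yp c0 < yp c) \<and> (c0 < c \<longrightarrow> yp c < yp c0))"
  proof (intro conjI ballI impI)
    show "m + 2*n + 1 - a i < yp c0" using yb c0(2) an by linarith
    show "yp c0 \<le> m + 2*n" using F(4)[OF c0C] by simp
  next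
    fix c assume c: "c \<in> open_cols i (insert c0 D)" and cc: "c \<le> c0"
    have cC: "c \<in> open_cols i D" "c \<noteq> c0" using c cols by auto
    then have "c < c0" using cc by simp
    then show "yp c0 < yp c" using F(3)[OF cC(1) c0C] by simp
  next
    fix c assume c: "c \<in> open_cols i (insert c0 D)" and cc: "c0 < c"
    have cC: "c \<in> open_cols i D" using c cols by auto
    show "yp c < yp c0" using F(3)[OF c0C cC cc] by simp
  qed
  show ?thesis by (rule state_invI_y[OF i1 F(1) D'(1) nest range c0(2) D'(2) inner outer cursor])
qed

lemma state_inv_skip_y:
  assumes V: "state_inv i j 1 D u zp yp" and i1: "1 \<le> i" and c0: "j < c0" "c0 < a i" "c0 \<notin> D"
    and c0min: "\<forall>c. j < c \<and> c < a i \<and> c \<notin> D \<longrightarrow> c0 \<le> c"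
  shows "state_inv i c0 1 D (yp c0) zp (yp(c0 := u))"
proof -
  note F = state_invD[OF V i1]
  note CF = next_col_facts[OF V i1 c0 c0min]
  have left: "u < yp c" if "c \<in> open_cols i D" "c < c0" for c using F(13)[OF _ that(1)] CF(2)[OF that] by simp
  have right: "yp c < u" if "c \<in> open_cols i D" "c0 < c" for c using F(13)[OF _ that(1)] c0(1) that(2) by simp
  have u: "m + 2*n + 1 - a i < u" "u \<le> m + 2*n" "yp c0 < u" "m + 2*n + 1 - c0 \<le> yp c0"
    using F(12) F(13)[OF _ CF(1)] c0(1) F(8)[OF CF(1) c0(2)] by auto
  show ?thesis
  proof (rule state_invI_y[OF i1 F(1) F(2) _ _ c0(2) F(6)])
    show "\<forall>c\<in>open_cols i D. \<forall>c'\<in>open_cols i D. c < c' \<longrightarrow> zp c < zp c' \<and> (yp(c0 := u)) c' < (yp(c0 := u)) c"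
      using F(3) left right by fastforce
    show "\<forall>c\<in>open_cols i D. i \<le> zp c \<and> 1 \<le> zp c \<and> zp c \<le> m + n \<and> m + n < (yp(c0 := u)) c
        \<and> (yp(c0 := u)) c \<le> m + 2*n"
      using F(4) u a_le_n[OF i1 F(1)] by auto
    show "\<forall>c\<in>open_cols i D. c < a i \<longrightarrow> zp c \<le> m + c \<and> m + 2*n + 1 - c \<le> (yp(c0 := u)) c"
      using F(8) u by auto
    show "\<forall>c\<in>open_cols i D. a i < c \<longrightarrow> zp c = m + c \<and> (yp(c0 := u)) c = m + 2*n + 1 - c"
      using F(9) c0(2) by auto
    show "m + 2*n + 1 - a i < yp c0 \<and> yp c0 \<le> m + 2*n \<and> (\<forall>c\<in>open_cols i D. (c \<le> c0 \<longrightarrow> yp c0 < (yp(c0 := u)) c)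
        \<and> (c0 < c \<longrightarrow> (yp(c0 := u)) c < yp c0))"
    proof (intro conjI ballI impI)
      show "m + 2*n + 1 - a i < yp c0" using u(4) c0(2) a_le_n[OF i1 F(1)] by linarith
      show "yp c0 \<le> m + 2*n" using F(4)[OF CF(1)] by simp
    next
      fix c assume "c \<in> open_cols i D" "c \<le> c0"
      then show "yp c0 < (yp(c0 := u)) c" using F(3)[OF _ CF(1)] u(3) by (cases "c = c0") auto
    next
      fix c assume "c \<in> open_cols i D" "c0 < c"
      then show "(yp(c0 := u)) c < yp c0" using F(3)[OF CF(1)] by auto
    qed
  qed
qed

lemma state_inv_fill_y:
  assumes V: "state_inv i j 1 D u zp yp" and i1: "1 \<le> i" and c0: "j < c0" "c0 < a i" "c0 \<notin> D"
    and c0min: "\<forall>c. j < c \<and> c < a i \<and> c \<notin> D \<longrightarrow> c0 \<le> c"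
  shows "state_inv i c0 0 (insert c0 D) (zp c0) zp yp"
proof -
  note F = state_invD[OF V i1]
  note CF = next_col_facts[OF V i1 c0 c0min]
  have c0C: "c0 \<in> open_cols i D" by (rule CF(1))
  have cols: "open_cols i (insert c0 D) = open_cols i D - {c0}" using open_cols_insert[of i c0 D] by simp
  have zb: "zp c0 \<le> m + c0" using F(8)[OF c0C c0(2)] by simp
  have c0n: "1 \<le> c0" "c0 \<le> n" using c0C unfolding open_cols_iff by auto
  have D': "insert c0 D \<subseteq> {1..n}" "insert c0 D \<subseteq> {..<a i}" using F(2,6) c0n c0(2) by auto
  have nest: "\<forall>c\<in>open_cols i (insert c0 D). \<forall>c'\<in>open_cols i (insert c0 D). c < c' \<longrightarrow> zp c < zp c' \<and> yp c' < yp c"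
    unfolding cols using F(3) by blast
  have range: "\<forall>c\<in>open_cols i (insert c0 D). i \<le> zp c \<and> 1 \<le> zp c \<and> zp c \<le> m + n \<and> m + n < yp c \<and> yp c \<le> m + 2*n"
    unfolding cols using F(4) by blast
  have inner: "\<forall>c\<in>open_cols i (insert c0 D). c < a i \<longrightarrow> zp c \<le> m + c \<and> m + 2*n + 1 - c \<le> yp c"
    unfolding cols using F(8) by blast
  have outer: "\<forall>c\<in>open_cols i (insert c0 D). a i < c \<longrightarrow> zp c = m + c \<and> yp c = m + 2*n + 1 - c"
    unfolding cols using F(9) by blast
  have cursor: "i \<le> zp c0 \<and> zp c0 < m + a i \<and> (\<forall>c\<in>open_cols i (insert c0 D). (c \<le> c0 \<longrightarrow> zp c < zp c0) \<and> (c0 < c \<longrightarrow> zp c0 < zp c))"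
  proof (intro conjI ballI impI)
    show "i \<le> zp c0" using F(4)[OF c0C] by simp
    show "zp c0 < m + a i" using zb c0(2) by simp
  next
    fix c assume c: "c \<in> open_cols i (insert c0 D)" and cc: "c \<le> c0"
    have cC: "c \<in> open_cols i D" "c \<noteq> c0" using c cols by auto
    then have "c < c0" using cc by simp
    then show "zp c < zp c0" using F(3)[OF cC(1) c0C] by simp
  next
    fix c assume c: "c \<in> open_cols i (insert c0 D)" and cc: "c0 < c"
    have cC: "c \<in> open_cols i D" using c cols by auto
    show "zp c0 < zp c" using F(3)[OF c0C cC cc] by simp
  qed
  show ?thesis by (rule state_invI_xz[OF i1 F(1) D'(1) nest range c0(2) D'(2) inner outer cursor])
qed


definition rest_diagram :: "nat \<Rightarrow> nat set \<Rightarrow> nat \<Rightarrow> (nat \<Rightarrow> nat) \<Rightarrow> (nat \<Rightarrow> nat) \<Rightarrow> chord_diagram" where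
  "rest_diagram i D c0 zp yp = pending i \<union> rungs (open_cols i D - {c0}) zp yp"

lemma diagram_decompose:
  assumes "1 \<le> i" "c0 \<in> open_cols i D"
  shows "diagram i u D zp yp = insert {u, partner i} (insert {zp c0, yp c0} (rest_diagram i D c0 zp yp))"
    and "diagram i u (insert c0 D) zp yp = insert {u, partner i} (rest_diagram i D c0 zp yp)"
    and "diagram i u D (zp(c0 := v)) yp = insert {u, partner i} (insert {v, yp c0} (rest_diagram i D c0 zp yp))"
    and "diagram i u D zp (yp(c0 := v)) = insert {u, partner i} (insert {zp c0, v} (rest_diagram i D c0 zp yp))"
proof -
  show "diagram i u D zp yp = insert {u, partner i} (insert {zp c0, yp c0} (rest_diagram i D c0 zp yp))"
    unfolding diagram_pos[OF assms(1)] rest_diagram_def using rungs_remove[OF assms(2)] by auto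
  show "diagram i u (insert c0 D) zp yp = insert {u, partner i} (rest_diagram i D c0 zp yp)"
    unfolding diagram_pos[OF assms(1)] rest_diagram_def open_cols_insert by auto
  show "diagram i u D (zp(c0 := v)) yp = insert {u, partner i} (insert {v, yp c0} (rest_diagram i D c0 zp yp))"
    unfolding diagram_pos[OF assms(1)] rest_diagram_def rungs_upd_z[OF assms(2)] by auto
  show "diagram i u D zp (yp(c0 := v)) = insert {u, partner i} (insert {zp c0, v} (rest_diagram i D c0 zp yp))"
    unfolding diagram_pos[OF assms(1)] rest_diagram_def rungs_upd_y[OF assms(2)] by auto
qed

lemma rung_around_partner:
  assumes V: "state_inv i j \<sigma> D u zp yp" and i1: "1 \<le> i" and c0: "c0 \<in> open_cols i D" "c0 < a i"
  shows "zp c0 < partner i" "partner i < yp c0"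
proof -
  note F = state_invD[OF V i1]
  have "zp c0 \<le> m + c0" "m + 2*n + 1 - c0 \<le> yp c0" "zp c0 \<le> m + n" "m + n < yp c0"
    using F(4)[OF c0(1)] F(8)[OF c0] by auto
  then show "zp c0 < partner i" "partner i < yp c0"
    using partner_facts[OF i1 F(1)] c0(2) a_le_n[OF i1 F(1)] by (cases "\<epsilon> i = 0"; linarith)+
qed

lemma rest_outside_xz:
  assumes V: "state_inv i j 0 D u zp yp" and i1: "1 \<le> i" and c0: "j < c0" "c0 < a i" "c0 \<notin> D"
    and c0min: "\<forall>c. j < c \<and> c < a i \<and> c \<notin> D \<longrightarrow> c0 \<le> c" and v: "v \<in> \<Union>(rest_diagram i D c0 zp yp)"
  shows "v < u \<or> zp c0 < v"
proof -
  note F = state_invD[OF V i1]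
  note CF = next_col_facts[OF V i1 c0 c0min]
  have zb: "zp c0 \<le> m + c0" "zp c0 \<le> m + n" using F(4)[OF CF(1)] F(8)[OF CF(1) c0(2)] by auto
  consider (P) "v \<in> \<Union>(pending i)" | (B) c where "c \<in> open_cols i D" "c \<noteq> c0" "v = zp c \<or> v = yp c"
    using v unfolding rest_diagram_def Union_Un_distrib Un_iff Union_rungs by blast
  then show ?thesis
  proof cases
    case P
    then show ?thesis using Union_pending_bounds[OF P F(1)] F(10) zb c0(2) by auto
  next
    case (B c)
    then have "c \<le> j \<or> c0 < c" using CF(3) by fastforce
    then show ?thesis using B F(3)[OF CF(1) B(1)] F(4)[OF B(1)] F(11)[OF _ B(1)] zb by auto
  qed
qed

lemma rest_outside_y:
  assumes V: "state_inv i j 1 D u zp yp" and i1: "1 \<le> i" and c0: "j < c0" "c0 < a i" "c0 \<notin> D"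
    and c0min: "\<forall>c. j < c \<and> c < a i \<and> c \<notin> D \<longrightarrow> c0 \<le> c" and v: "v \<in> \<Union>(rest_diagram i D c0 zp yp)"
  shows "v < yp c0 \<or> u < v"
proof -
  note F = state_invD[OF V i1]
  note CF = next_col_facts[OF V i1 c0 c0min]
  have yb: "m + 2*n + 1 - c0 \<le> yp c0" "m + n < yp c0" using F(4)[OF CF(1)] F(8)[OF CF(1) c0(2)] by auto
  consider (P) "v \<in> \<Union>(pending i)" | (B) c where "c \<in> open_cols i D" "c \<noteq> c0" "v = zp c \<or> v = yp c"
    using v unfolding rest_diagram_def Union_Un_distrib Un_iff Union_rungs by blast
  then show ?thesis
  proof cases
    case P
    then show ?thesis using Union_pending_bounds[OF P F(1)] F(1) yb c0(2) a_le_n[OF i1 F(1)] by auto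
  next
    case (B c)
    then have "c \<le> j \<or> c0 < c" using CF(3) by fastforce
    then show ?thesis using B F(3)[OF CF(1) B(1)] F(4)[OF B(1)] F(13)[OF _ B(1)] yb by auto
  qed
qed

lemma finite_diagram: "finite (diagram i u D zp yp)" "\<forall>X\<in>diagram i u D zp yp. finite X"
proof -
  have "pending i = (\<lambda>k. {k, partner k}) ` {1..<i}" unfolding pending_def by auto
  then have "finite (pending i)" by simp
  moreover have "rungs (open_cols i D) zp yp = (\<lambda>c. {zp c, yp c}) ` open_cols i D" unfolding rungs_def by auto
  moreover have "finite (open_cols i D)" unfolding open_cols_def by (rule finite_subset[of _ "{..n}"]) auto
  ultimately show "finite (diagram i u D zp yp)" unfolding diagram_def by simp
  show "\<forall>X\<in>diagram i u D zp yp. finite X" unfolding diagram_def pending_def rungs_def by auto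
qed

lemma row_end_facts:
  assumes V: "state_inv i j \<sigma> D u zp yp" and i1: "1 \<le> i" and P: "\<forall>c. j < c \<and> c < a i \<longrightarrow> c \<in> D"
  shows "\<And>c. c \<in> open_cols i D \<Longrightarrow> c < a i \<Longrightarrow> c \<le> j"
    "\<And>c. c \<in> open_cols i D \<Longrightarrow> c \<noteq> a i"
    "a i \<notin> D" "1 \<le> a i" "a i \<le> n"
    "open_cols (i - 1) (insert (a i) D) = open_cols i D"
    "a i \<notin> open_cols i D"
    "open_cols (i - 1) D = insert (a i) (open_cols i D)"
    "1 < i \<Longrightarrow> a i < a (i - 1)"
proof -
  note F = state_invD[OF V i1]
  show "\<And>c. c \<in> open_cols i D \<Longrightarrow> c < a i \<Longrightarrow> c \<le> j"
  proof -
    fix c assume c: "c \<in> open_cols i D" "c < a i"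
    show "c \<le> j"
    proof (rule ccontr)
      assume "\<not> c \<le> j"
      then have "c \<in> D" using P c(2) by simp
      then show False using c(1) unfolding open_cols_iff by simp
    qed
  qed
  show "\<And>c. c \<in> open_cols i D \<Longrightarrow> c \<noteq> a i" using open_cols_ne_a[OF _ i1] by blast
  show aD: "a i \<notin> D" using F(6) by auto
  show a1: "1 \<le> a i" using a_ge1[OF i1 F(1)] .
  show an: "a i \<le> n" using a_le_n[OF i1 F(1)] .
  have "{1..i} = insert i {1..i - 1}" using i1 by auto
  then have img: "a ` {1..i} = insert (a i) (a ` {1..i - 1})" by simp
  show "open_cols (i - 1) (insert (a i) D) = open_cols i D" unfolding open_cols_def img by auto
  show aC: "a i \<notin> open_cols i D" using open_cols_ne_a[OF _ i1] by blast
  have "a i \<notin> a ` {1..i - 1}"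
  proof
    assume "a i \<in> a ` {1..i - 1}"
    then obtain k where k: "k \<in> {1..i - 1}" "a i = a k" by blast
    then have "k = i" using a_inj[of i k] i1 F(1) by auto
    then show False using k i1 by simp
  qed
  then show "open_cols (i - 1) D = insert (a i) (open_cols i D)" unfolding open_cols_def img using aD a1 an by auto
  show "1 < i \<Longrightarrow> a i < a (i - 1)" using a_strict_mono[of "i - 1" i] F(1) by simp
qed

lemma state_inv_next_row:
  assumes i1: "1 \<le> i" "i \<le> m" and D': "D' \<subseteq> {1..n}" "D' \<subseteq> {..a i}"
   and nest: "\<forall>c\<in>open_cols (i - 1) D'. \<forall>c'\<in>open_cols (i - 1) D'. c < c' \<longrightarrow> zp c < zp c' \<and> yp c' < yp c"
   and rng: "\<forall>c\<in>open_cols (i - 1) D'. i \<le> zp c \<and> 1 \<le> zp c \<and> zp c \<le> m + n \<and> m + n < yp c \<and> yp c \<le> m + 2*n"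
   and bnd: "\<forall>c\<in>open_cols (i - 1) D'. c \<le> a i \<longrightarrow> zp c \<le> m + c \<and> m + 2*n + 1 - c \<le> yp c"
   and ex: "\<forall>c\<in>open_cols (i - 1) D'. a i < c \<longrightarrow> zp c = m + c \<and> yp c = m + 2*n + 1 - c"
  shows "state_inv (i - 1) 0 0 D' (i - 1) zp yp"
proof (cases "i = 1")
  case True
  have rng0: "\<forall>c\<in>open_cols 0 D'. 1 \<le> zp c \<and> zp c \<le> m + n \<and> m + n < yp c \<and> yp c \<le> m + 2*n"
    using rng True by simp
  show ?thesis using state_invI_0[OF D'(1) _ rng0] nest True by simp
next
  case False
  then have i2: "1 \<le> i - 1" using i1 by simp
  have aa: "a i < a (i - 1)" using a_strict_mono[of "i - 1" i] i1 False by simp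
  have "i - 1 \<le> m" using i1 by simp
  then have a0: "0 < a (i - 1)" using a_ge1[OF i2] by simp
  have rng': "\<forall>c\<in>open_cols (i - 1) D'. i - 1 \<le> zp c \<and> 1 \<le> zp c \<and> zp c \<le> m + n \<and> m + n < yp c \<and> yp c \<le> m + 2*n"
    using rng by auto
  have D'': "D' \<subseteq> {..<a (i - 1)}" using D'(2) aa by auto
  have bnd': "\<forall>c\<in>open_cols (i - 1) D'. c < a (i - 1) \<longrightarrow> zp c \<le> m + c \<and> m + 2*n + 1 - c \<le> yp c"
  proof (intro ballI impI)
    fix c assume c: "c \<in> open_cols (i - 1) D'" "c < a (i - 1)"
    show "zp c \<le> m + c \<and> m + 2*n + 1 - c \<le> yp c"
    proof (cases "c \<le> a i")
      case True then show ?thesis using bnd c by blast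
    next
      case False then show ?thesis using ex c by auto
    qed
  qed
  have ex': "\<forall>c\<in>open_cols (i - 1) D'. a (i - 1) < c \<longrightarrow> zp c = m + c \<and> yp c = m + 2*n + 1 - c"
    using ex aa by auto
  have zc: "i - 1 \<le> i - 1 \<and> i - 1 < m + a (i - 1) \<and> (\<forall>c\<in>open_cols (i - 1) D'. (c \<le> 0 \<longrightarrow> zp c < i - 1) \<and> (0 < c \<longrightarrow> i - 1 < zp c))"
  proof (intro conjI ballI impI)
    show "i - 1 \<le> i - 1" by simp
    show "i - 1 < m + a (i - 1)" using i1 a0 by simp
  next
    fix c assume "c \<in> open_cols (i - 1) D'" "c \<le> 0"
    then show "zp c < i - 1" unfolding open_cols_iff by simp
  next
    fix c assume "c \<in> open_cols (i - 1) D'" "0 < c"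
    then show "i - 1 < zp c" using rng i1 by force
  qed
  show ?thesis by (rule state_invI_xz[OF i2 _ D'(1) nest rng' a0 D'' bnd' ex' zc]) (use i1 in simp)
qed

lemma state_inv_row_closed:
  assumes V: "state_inv i j \<sigma> D u zp yp" and i1: "1 \<le> i" and P: "\<forall>c. j < c \<and> c < a i \<longrightarrow> c \<in> D"
  shows "state_inv (i - 1) 0 0 (insert (a i) D) (i - 1) zp yp"
proof -
  note F = state_invD[OF V i1]
  note E = row_end_facts[OF V i1 P]
  have D': "insert (a i) D \<subseteq> {1..n}" "insert (a i) D \<subseteq> {..a i}" using F(2,6) E(4,5) by auto
  show ?thesis
  proof (rule state_inv_next_row[OF i1 F(1) D'])
    show "\<forall>c\<in>open_cols (i - 1) (insert (a i) D). \<forall>c'\<in>open_cols (i - 1) (insert (a i) D). c < c' \<longrightarrow> zp c < zp c' \<and> yp c' < yp c"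
      unfolding E(6) using F(3) by blast
    show "\<forall>c\<in>open_cols (i - 1) (insert (a i) D). i \<le> zp c \<and> 1 \<le> zp c \<and> zp c \<le> m + n \<and> m + n < yp c \<and> yp c \<le> m + 2*n"
      unfolding E(6) using F(4) by blast
    show "\<forall>c\<in>open_cols (i - 1) (insert (a i) D). c \<le> a i \<longrightarrow> zp c \<le> m + c \<and> m + 2*n + 1 - c \<le> yp c"
    proof (intro ballI impI)
      fix c assume c: "c \<in> open_cols (i - 1) (insert (a i) D)" "c \<le> a i"
      then have cC: "c \<in> open_cols i D" using E(6) by simp
      then have "c < a i" using E(2)[OF cC] c(2) by simp
      then show "zp c \<le> m + c \<and> m + 2*n + 1 - c \<le> yp c" using F(8)[OF cC] by simp
    qed
    show "\<forall>c\<in>open_cols (i - 1) (insert (a i) D). a i < c \<longrightarrow> zp c = m + c \<and> yp c = m + 2*n + 1 - c"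
      unfolding E(6) using F(9) by blast
  qed
qed

lemma row_end_close_xz:
  assumes V: "state_inv i j 0 D u zp yp" and i1: "1 \<le> i" and P: "\<forall>c. j < c \<and> c < a i \<longrightarrow> c \<in> D" and e: "\<epsilon> i \<noteq> 0"
  shows "u < partner i" "diagram i u D zp yp = insert {u, partner i} (diagram (i - 1) (i - 1) (insert (a i) D) zp yp)"
    "\<forall>v\<in>\<Union>(diagram (i - 1) (i - 1) (insert (a i) D) zp yp). v < u \<or> partner i < v"
    "{u, partner i} \<subseteq> {1..m+n}"
proof -
  note F = state_invD[OF V i1]
  note E = row_end_facts[OF V i1 P]
  have w: "partner i = m + a i" "partner i \<le> m + n" using partner_facts(2)[OF i1 F(1) e] by auto
  have ui: "i \<le> u" "u < m + a i" using F(10) by auto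
  show "u < partner i" using w ui by simp
  have DP: "diagram (i - 1) (i - 1) (insert (a i) D) zp yp = pending i \<union> rungs (open_cols i D) zp yp"
    using diagram_prev[OF i1] E(6) by simp
  show "diagram i u D zp yp = insert {u, partner i} (diagram (i - 1) (i - 1) (insert (a i) D) zp yp)"
    unfolding DP diagram_pos[OF i1] by auto
  show "\<forall>v\<in>\<Union>(diagram (i - 1) (i - 1) (insert (a i) D) zp yp). v < u \<or> partner i < v"
  proof
    fix v assume "v \<in> \<Union>(diagram (i - 1) (i - 1) (insert (a i) D) zp yp)"
    then consider (P) "v \<in> \<Union>(pending i)" | (B) c where "c \<in> open_cols i D" "v = zp c \<or> v = yp c"
      unfolding DP Union_Un_distrib Un_iff Union_rungs by blast
    then show "v < u \<or> partner i < v"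
    proof cases
      case P
      then show ?thesis using Union_pending_bounds[OF P F(1)] ui w by auto
    next
      case (B c)
      then have "c \<le> j \<or> a i < c" using E(1)[OF B(1)] E(2)[OF B(1)] by fastforce
      then show ?thesis using B F(4)[OF B(1)] F(9)[OF B(1)] F(11)[OF _ B(1)] w by auto
    qed
  qed
  show "{u, partner i} \<subseteq> {1..m+n}" using ui i1 w by simp
qed

lemma row_end_close_y:
  assumes V: "state_inv i j 1 D u zp yp" and i1: "1 \<le> i" and P: "\<forall>c. j < c \<and> c < a i \<longrightarrow> c \<in> D" and e: "\<epsilon> i = 0"
  shows "partner i < u" "diagram i u D zp yp = insert {partner i, u} (diagram (i - 1) (i - 1) (insert (a i) D) zp yp)"
    "\<forall>v\<in>\<Union>(diagram (i - 1) (i - 1) (insert (a i) D) zp yp). v < partner i \<or> u < v"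
    "{partner i, u} \<subseteq> {m+n+1..m+2*n}"
proof -
  note F = state_invD[OF V i1]
  note E = row_end_facts[OF V i1 P]
  have w: "partner i = m + 2*n + 1 - a i" "m + n < partner i" using partner_facts(1)[OF i1 F(1) e] by auto
  have ui: "m + 2*n + 1 - a i < u" "u \<le> m + 2*n" using F(12) by auto
  show "partner i < u" using w ui by simp
  have DP: "diagram (i - 1) (i - 1) (insert (a i) D) zp yp = pending i \<union> rungs (open_cols i D) zp yp"
    using diagram_prev[OF i1] E(6) by simp
  show "diagram i u D zp yp = insert {partner i, u} (diagram (i - 1) (i - 1) (insert (a i) D) zp yp)"
    unfolding DP diagram_pos[OF i1] by (auto simp: insert_commute)
  show "\<forall>v\<in>\<Union>(diagram (i - 1) (i - 1) (insert (a i) D) zp yp). v < partner i \<or> u < v"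
  proof
    fix v assume "v \<in> \<Union>(diagram (i - 1) (i - 1) (insert (a i) D) zp yp)"
    then consider (P) "v \<in> \<Union>(pending i)" | (B) c where "c \<in> open_cols i D" "v = zp c \<or> v = yp c"
      unfolding DP Union_Un_distrib Un_iff Union_rungs by blast
    then show "v < partner i \<or> u < v"
    proof cases
      case P
      then show ?thesis using Union_pending_bounds[OF P F(1)] F(1) w by auto
    next
      case (B c)
      then have "c \<le> j \<or> a i < c" using E(1)[OF B(1)] E(2)[OF B(1)] by fastforce
      moreover have "c \<le> n" using B(1) unfolding open_cols_iff by simp
      ultimately show ?thesis using B F(4)[OF B(1)] F(9)[OF B(1)] F(13)[OF _ B(1)] w by auto
    qed
  qed
  show "{partner i, u} \<subseteq> {m+n+1..m+2*n}" using ui w by simp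
qed


text \<open>Closing row \<open>i\<close> with a 0 in its last cell turns the chord of \<open>x\<^sub>i\<close> into the rung of column
  \<open>a i\<close>, with endpoints \<open>z'\<close> and \<open>y'\<close>.\<close>

lemma state_inv_new_rung:
  assumes V: "state_inv i j \<sigma> D u zp yp" and i1: "1 \<le> i" and P: "\<forall>c. j < c \<and> c < a i \<longrightarrow> c \<in> D"
    and z': "i \<le> z'" "z' \<le> m + a i" and y': "m + 2*n + 1 - a i \<le> y'" "y' \<le> m + 2*n"
    and below: "\<And>c. c \<in> open_cols i D \<Longrightarrow> c < a i \<Longrightarrow> zp c < z' \<and> y' < yp c"
  shows "state_inv (i - 1) 0 0 D (i - 1) (zp(a i := z')) (yp(a i := y'))"
proof -
  note F = state_invD[OF V i1]
  note E = row_end_facts[OF V i1 P]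
  have CC: "open_cols (i - 1) D = insert (a i) (open_cols i D)" by (rule E(8))
  have above: "zp c = m + c" "yp c = m + 2*n + 1 - c" "c \<le> n" if "c \<in> open_cols i D" "a i < c" for c
    using F(9)[OF that] that(1) unfolding open_cols_iff by auto
  have old: "c \<in> open_cols i D" "c < a i \<or> a i < c" if "c \<in> open_cols (i - 1) D" "c \<noteq> a i" for c
    using that CC by auto
  show ?thesis
  proof (rule state_inv_next_row[OF i1 F(1)])
    show "D \<subseteq> {1..n}" "D \<subseteq> {..a i}" using F(2,6) by auto
    show "\<forall>c\<in>open_cols (i - 1) D. \<forall>c'\<in>open_cols (i - 1) D. c < c' \<longrightarrow>
        (zp(a i := z')) c < (zp(a i := z')) c' \<and> (yp(a i := y')) c' < (yp(a i := y')) c"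
    proof (intro ballI impI)
      fix c c' assume c: "c \<in> open_cols (i - 1) D" and c': "c' \<in> open_cols (i - 1) D" and "c < c'"
      then consider "c = a i" "a i < c'" "c' \<in> open_cols i D" | "c' = a i" "c < a i" "c \<in> open_cols i D"
        | "c \<in> open_cols i D" "c' \<in> open_cols i D" "c \<noteq> a i" "c' \<noteq> a i"
        using old by blast
      then show "(zp(a i := z')) c < (zp(a i := z')) c' \<and> (yp(a i := y')) c' < (yp(a i := y')) c"
      proof cases
        case 1
        then show ?thesis using above[OF 1(3,2)] z' y' by auto
      next
        case 2
        then show ?thesis using below[OF 2(3,2)] by auto
      next
        case 3
        then show ?thesis using F(3)[OF 3(1,2) \<open>c < c'\<close>] by auto
      qed
    qed
    show "\<forall>c\<in>open_cols (i - 1) D. i \<le> (zp(a i := z')) c \<and> 1 \<le> (zp(a i := z')) c \<and> (zp(a i := z')) c \<le> m + n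
        \<and> m + n < (yp(a i := y')) c \<and> (yp(a i := y')) c \<le> m + 2*n"
      using F(4) old z' y' i1 E(5) by fastforce
    show "\<forall>c\<in>open_cols (i - 1) D. c \<le> a i \<longrightarrow> (zp(a i := z')) c \<le> m + c \<and> m + 2*n + 1 - c \<le> (yp(a i := y')) c"
      using F(8) old z' y' by fastforce
    show "\<forall>c\<in>open_cols (i - 1) D. a i < c \<longrightarrow> (zp(a i := z')) c = m + c \<and> (yp(a i := y')) c = m + 2*n + 1 - c"
      using above old by fastforce
  qed
qed

lemma row_end_rung_xz:
  assumes V: "state_inv i j 0 D u zp yp" and i1: "1 \<le> i" and P: "\<forall>c. j < c \<and> c < a i \<longrightarrow> c \<in> D" and e: "\<epsilon> i = 0"
  shows "state_inv (i - 1) 0 0 D (i - 1) (zp(a i := u)) (yp(a i := partner i))"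
    "diagram i u D zp yp = diagram (i - 1) (i - 1) D (zp(a i := u)) (yp(a i := partner i))"
proof -
  note F = state_invD[OF V i1]
  note E = row_end_facts[OF V i1 P]
  have w: "partner i = m + 2*n + 1 - a i" using partner_facts(1)[OF i1 F(1) e] by auto
  show "state_inv (i - 1) 0 0 D (i - 1) (zp(a i := u)) (yp(a i := partner i))"
  proof (rule state_inv_new_rung[OF V i1 P])
    fix c assume c: "c \<in> open_cols i D" "c < a i"
    then show "zp c < u \<and> partner i < yp c" using E(1) F(8) F(11) w E(5) by fastforce
  qed (use F(10) w E(4,5) in auto)
  show "diagram i u D zp yp = diagram (i - 1) (i - 1) D (zp(a i := u)) (yp(a i := partner i))"
    unfolding diagram_prev[OF i1] diagram_pos[OF i1] E(8) rungs_insert_upd[OF E(7)] by auto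
qed

lemma row_end_rung_y:
  assumes V: "state_inv i j 1 D u zp yp" and i1: "1 \<le> i" and P: "\<forall>c. j < c \<and> c < a i \<longrightarrow> c \<in> D" and e: "\<epsilon> i \<noteq> 0"
  shows "state_inv (i - 1) 0 0 D (i - 1) (zp(a i := partner i)) (yp(a i := u))"
    "diagram i u D zp yp = diagram (i - 1) (i - 1) D (zp(a i := partner i)) (yp(a i := u))"
proof -
  note F = state_invD[OF V i1]
  note E = row_end_facts[OF V i1 P]
  have w: "partner i = m + a i" using partner_facts(2)[OF i1 F(1) e] by auto
  show "state_inv (i - 1) 0 0 D (i - 1) (zp(a i := partner i)) (yp(a i := u))"
  proof (rule state_inv_new_rung[OF V i1 P])
    fix c assume c: "c \<in> open_cols i D" "c < a i"
    then show "zp c < partner i \<and> u < yp c" using E(1) F(8) F(13) w by fastforce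
  qed (use F(1) F(12) w in auto)
  show "diagram i u D zp yp = diagram (i - 1) (i - 1) D (zp(a i := partner i)) (yp(a i := u))"
    unfolding diagram_prev[OF i1] diagram_pos[OF i1] E(8) rungs_insert_upd[OF E(7)] by (auto simp: insert_commute)
qed

lemma ncd_rel_insert_chord:
  assumes R: "ncd_rel G M" and fin: "finite (\<Union>G)"
    and pq: "p < q" "\<forall>v\<in>\<Union>G. v < p \<or> q < v"
    and side: "{p, q} \<subseteq> {1..m+n} \<or> {p, q} \<subseteq> {m+n+1..m+2*n}"
  shows "ncd_rel (insert {p, q} G) (image_mset (insert {p, q}) M)"
    and "stat_count stat k (image_mset (insert {p, q}) M) = (if k = 0 then 0 else stat_count stat (k - 1) M)"
proof -
  show "ncd_rel (insert {p, q} G) (image_mset (insert {p, q}) M)" by (rule ncd_rel_insert_outside[OF R pq])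
  have "stat (insert {p, q} F) = Suc (stat F)" if F: "F \<in># M" for F
  proof (rule stat_insert)
    have U: "\<Union>F = \<Union>G" by (rule ncd_rel_Union[OF R F])
    show "finite F" using fin unfolding U[symmetric] by (rule finite_UnionD)
    show "{p, q} \<notin> F" using U pq by fastforce
  qed (use side in auto)
  then show "stat_count stat k (image_mset (insert {p, q}) M) = (if k = 0 then 0 else stat_count stat (k - 1) M)"
    by (rule stat_count_image_mset)
qed

lemma finite_Union_diagram: "finite (\<Union>(diagram i u D zp yp))"
  using finite_diagram by blast

definition ncd_matches :: "nat \<Rightarrow> nat \<Rightarrow> nat \<Rightarrow> nat set \<Rightarrow> nat \<Rightarrow> (nat \<Rightarrow> nat) \<Rightarrow> (nat \<Rightarrow> nat) \<Rightarrow> bool" where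
  "ncd_matches i j \<sigma> D u zp yp \<longleftrightarrow>
     (\<exists>M. ncd_rel (diagram i u D zp yp) M \<and> (\<forall>k. stat_count stat k M = young_count a \<epsilon> i j \<sigma> D k))"

lemma ncd_matches_no_rows:
  assumes V: "state_inv 0 j \<sigma> D u zp yp"
  shows "ncd_matches 0 j \<sigma> D u zp yp"
proof -
  have nest: "\<forall>c\<in>open_cols 0 D. \<forall>c'\<in>open_cols 0 D. c < c' \<longrightarrow> zp c < zp c' \<and> yp c' < yp c"
    and rng: "\<forall>c\<in>open_cols 0 D. 1 \<le> zp c \<and> zp c \<le> m + n \<and> m + n < yp c \<and> yp c \<le> m + 2*n"
    using V unfolding state_inv_def by auto
  have lt: "\<forall>c\<in>open_cols 0 D. zp c < yp c" using rng by fastforce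
  have "nonintersecting (diagram 0 u D zp yp)" unfolding diagram_zero by (rule nonintersecting_rungs[OF nest lt])
  moreover have "stat (diagram 0 u D zp yp) = 0" unfolding diagram_zero by (rule stat_rungs) (use rng in auto)
  ultimately show ?thesis unfolding ncd_matches_def young_count_no_rows stat_count_def
    by (intro exI[of _ "{#diagram 0 u D zp yp#}"]) (simp add: ncd_rel.base)
qed

lemma ncd_matches_next_cell_xz:
  assumes V: "state_inv i j 0 D u zp yp" and i1: "1 \<le> i"
    and c0: "j < c0" "c0 < a i" "c0 \<notin> D" and c0min: "\<forall>c. j < c \<and> c < a i \<and> c \<notin> D \<longrightarrow> c0 \<le> c"
    and fill: "ncd_matches i c0 1 (insert c0 D) (yp c0) zp yp" and skip: "ncd_matches i c0 0 D (zp c0) (zp(c0 := u)) yp"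
  shows "ncd_matches i j 0 D u zp yp"
proof -
  note F = state_invD[OF V i1]
  note c0C = next_col_facts(1)[OF V i1 c0 c0min]
  note around = rung_around_partner[OF V i1 c0C c0(2)]
  note dec = diagram_decompose[OF i1 c0C]
  define R where "R = rest_diagram i D c0 zp yp"
  have gap: "c \<in> D" if "j < c" "c < c0" for c using c0min that c0(2) by fastforce
  have count: "young_count a \<epsilon> i j 0 D k = young_count a \<epsilon> i c0 0 D k
      + (if k = 0 then 0 else young_count a \<epsilon> i c0 1 (insert c0 D) (k - 1))" for k
    using young_count_next_cell[of i j c0 a D 0] i1 c0 gap by simp
  have u: "i \<le> u" "u < zp c0" using state_invD(10)[OF V i1] state_invD(11)[OF V i1 _ c0C] c0(1) by auto
  have out: "\<forall>v\<in>\<Union>R. v < u \<or> zp c0 < v" using rest_outside_xz[OF V i1 c0 c0min] unfolding R_def by blast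
  obtain M1 where M1: "ncd_rel (insert {yp c0, partner i} R) M1"
      "\<forall>k. stat_count stat k M1 = young_count a \<epsilon> i c0 1 (insert c0 D) k"
    using fill unfolding ncd_matches_def dec(2) R_def by blast
  obtain M2 where M2: "ncd_rel (insert {zp c0, partner i} (insert {u, yp c0} R)) M2"
      "\<forall>k. stat_count stat k M2 = young_count a \<epsilon> i c0 0 D k"
    using skip unfolding ncd_matches_def dec(3) R_def by blast
  have fin: "finite (\<Union>(insert {yp c0, partner i} R))"
    using finite_Union_diagram[of i "yp c0" "insert c0 D" zp yp] unfolding dec(2) R_def[symmetric] .
  have out1: "\<forall>v\<in>\<Union>(insert {yp c0, partner i} R). v < u \<or> zp c0 < v" using out u(2) around by auto
  have "{u, zp c0} \<subseteq> {1..m+n}" using u i1 F(4)[OF c0C] by auto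
  note L = ncd_rel_insert_chord[OF M1(1) fin u(2) out1, OF disjI1, OF this]
  have "ncd_rel (insert {u, partner i} (insert {zp c0, yp c0} R)) (image_mset (insert {u, zp c0}) M1 + M2)"
  proof (rule ncd_rel_expand_rest[OF u(2) around])
    show "{u, partner i} \<notin> R" "{zp c0, yp c0} \<notin> R" using out u(2) by fastforce+
    show "ncd_rel (insert {u, zp c0} (insert {partner i, yp c0} R)) (image_mset (insert {u, zp c0}) M1)"
      using L(1) by (simp add: insert_commute)
    show "ncd_rel (insert {yp c0, u} (insert {zp c0, partner i} R)) M2"
      using M2(1) by (simp add: insert_commute)
  qed
  then show ?thesis unfolding ncd_matches_def count dec(1) R_def[symmetric]
    using L(2) M1(2) M2(2) by (intro exI[of _ "image_mset (insert {u, zp c0}) M1 + M2"]) (auto simp: stat_count_def)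
qed

lemma ncd_matches_next_cell_y:
  assumes V: "state_inv i j 1 D u zp yp" and i1: "1 \<le> i"
    and c0: "j < c0" "c0 < a i" "c0 \<notin> D" and c0min: "\<forall>c. j < c \<and> c < a i \<and> c \<notin> D \<longrightarrow> c0 \<le> c"
    and fill: "ncd_matches i c0 0 (insert c0 D) (zp c0) zp yp" and skip: "ncd_matches i c0 1 D (yp c0) zp (yp(c0 := u))"
  shows "ncd_matches i j 1 D u zp yp"
proof -
  note F = state_invD[OF V i1]
  note c0C = next_col_facts(1)[OF V i1 c0 c0min]
  note around = rung_around_partner[OF V i1 c0C c0(2)]
  note dec = diagram_decompose[OF i1 c0C]
  define R where "R = rest_diagram i D c0 zp yp"
  have gap: "c \<in> D" if "j < c" "c < c0" for c using c0min that c0(2) by fastforce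
  have count: "young_count a \<epsilon> i j 1 D k = young_count a \<epsilon> i c0 1 D k
      + (if k = 0 then 0 else young_count a \<epsilon> i c0 0 (insert c0 D) (k - 1))" for k
    using young_count_next_cell[of i j c0 a D 1] i1 c0 gap by simp
  have u: "yp c0 < u" "u \<le> m + 2*n" using state_invD(12)[OF V i1] state_invD(13)[OF V i1 _ c0C] c0(1) by auto
  have out: "\<forall>v\<in>\<Union>R. v < yp c0 \<or> u < v" using rest_outside_y[OF V i1 c0 c0min] unfolding R_def by blast
  obtain M1 where M1: "ncd_rel (insert {zp c0, partner i} R) M1"
      "\<forall>k. stat_count stat k M1 = young_count a \<epsilon> i c0 0 (insert c0 D) k"
    using fill unfolding ncd_matches_def dec(2) R_def by blast
  obtain M2 where M2: "ncd_rel (insert {yp c0, partner i} (insert {zp c0, u} R)) M2"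
      "\<forall>k. stat_count stat k M2 = young_count a \<epsilon> i c0 1 D k"
    using skip unfolding ncd_matches_def dec(4) R_def by blast
  have fin: "finite (\<Union>(insert {zp c0, partner i} R))"
    using finite_Union_diagram[of i "zp c0" "insert c0 D" zp yp] unfolding dec(2) R_def[symmetric] .
  have out1: "\<forall>v\<in>\<Union>(insert {zp c0, partner i} R). v < yp c0 \<or> u < v" using out around by auto
  have "{yp c0, u} \<subseteq> {m+n+1..m+2*n}" using u F(4)[OF c0C] by auto
  note L = ncd_rel_insert_chord[OF M1(1) fin u(1) out1, OF disjI2, OF this]
  have "ncd_rel (insert {zp c0, yp c0} (insert {partner i, u} R)) (image_mset (insert {yp c0, u}) M1 + M2)"
  proof (rule ncd_rel_expand_rest[OF around u(1)])
    show "{zp c0, yp c0} \<notin> R" "{partner i, u} \<notin> R" using out u(1) by fastforce+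
    show "ncd_rel (insert {zp c0, partner i} (insert {yp c0, u} R)) (image_mset (insert {yp c0, u}) M1)"
      using L(1) by (simp add: insert_commute)
    show "ncd_rel (insert {u, zp c0} (insert {partner i, yp c0} R)) M2"
      using M2(1) by (simp add: insert_commute)
  qed
  then show ?thesis unfolding ncd_matches_def count dec(1) R_def[symmetric]
    using L(2) M1(2) M2(2) by (intro exI[of _ "image_mset (insert {yp c0, u}) M1 + M2"])
      (auto simp: stat_count_def insert_commute)
qed

lemma ncd_matches_next_cell:
  assumes V: "state_inv i j \<sigma> D u zp yp" and i1: "1 \<le> i"
    and c0: "j < c0" "c0 < a i" "c0 \<notin> D" and c0min: "\<forall>c. j < c \<and> c < a i \<and> c \<notin> D \<longrightarrow> c0 \<le> c"
    and IH: "\<And>\<sigma>' D' u' zp' yp'. state_inv i c0 \<sigma>' D' u' zp' yp' \<Longrightarrow> ncd_matches i c0 \<sigma>' D' u' zp' yp'"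
  shows "ncd_matches i j \<sigma> D u zp yp"
proof -
  consider "\<sigma> = 0" | "\<sigma> = 1" using state_invD(7)[OF V i1] by fastforce
  then show ?thesis
  proof cases
    case 1
    note V = V[unfolded 1]
    show ?thesis unfolding 1 using ncd_matches_next_cell_xz[OF V i1 c0 c0min]
        IH[OF state_inv_fill_xz[OF V i1 c0 c0min]] IH[OF state_inv_skip_xz[OF V i1 c0 c0min]] .
  next
    case 2
    note V = V[unfolded 2]
    show ?thesis unfolding 2 using ncd_matches_next_cell_y[OF V i1 c0 c0min]
        IH[OF state_inv_fill_y[OF V i1 c0 c0min]] IH[OF state_inv_skip_y[OF V i1 c0 c0min]] .
  qed
qed

lemma ncd_matches_row_end:
  assumes V: "state_inv i j \<sigma> D u zp yp" and i1: "1 \<le> i" and P: "\<forall>c. j < c \<and> c < a i \<longrightarrow> c \<in> D"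
    and IH: "\<And>D' zp' yp'. state_inv (i - 1) 0 0 D' (i - 1) zp' yp' \<Longrightarrow> ncd_matches (i - 1) 0 0 D' (i - 1) zp' yp'"
  shows "ncd_matches i j \<sigma> D u zp yp"
proof -
  note F = state_invD[OF V i1]
  note E = row_end_facts[OF V i1 P]
  have count: "young_count a \<epsilon> i j \<sigma> D k = (if even (\<epsilon> i + \<sigma>) then young_count a \<epsilon> (i - 1) 0 0 D k
      else if k = 0 then 0 else young_count a \<epsilon> (i - 1) 0 0 (insert (a i) D) (k - 1))" for k
    by (rule young_count_last_cell) (use i1 F(5) E(3) P F(7) in auto)
  consider "\<sigma> = 0" "\<epsilon> i = 1" | "\<sigma> = 1" "\<epsilon> i = 0" | "\<sigma> = 0" "\<epsilon> i = 0" | "\<sigma> = 1" "\<epsilon> i = 1"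
    using F(7) eps_cases[OF i1 F(1)] by fastforce
  then show ?thesis
  proof cases
    case 1
    then have e: "\<epsilon> i \<noteq> 0" by simp
    note Z = row_end_close_xz[OF V[unfolded 1(1)] i1 P e]
    obtain M1 where M1: "ncd_rel (diagram (i - 1) (i - 1) (insert (a i) D) zp yp) M1"
        "\<forall>k. stat_count stat k M1 = young_count a \<epsilon> (i - 1) 0 0 (insert (a i) D) k"
      using IH[OF state_inv_row_closed[OF V i1 P]] unfolding ncd_matches_def by blast
    note L = ncd_rel_insert_chord[OF M1(1) finite_Union_diagram Z(1,3)] Z(4)
    show ?thesis unfolding ncd_matches_def count Z(2)
      using L M1(2) 1 by (intro exI[of _ "image_mset (insert {u, partner i}) M1"]) auto
  next
    case 2
    note Z = row_end_close_y[OF V[unfolded 2(1)] i1 P 2(2)]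
    obtain M1 where M1: "ncd_rel (diagram (i - 1) (i - 1) (insert (a i) D) zp yp) M1"
        "\<forall>k. stat_count stat k M1 = young_count a \<epsilon> (i - 1) 0 0 (insert (a i) D) k"
      using IH[OF state_inv_row_closed[OF V i1 P]] unfolding ncd_matches_def by blast
    note L = ncd_rel_insert_chord[OF M1(1) finite_Union_diagram Z(1,3)] Z(4)
    show ?thesis unfolding ncd_matches_def count Z(2)
      using L M1(2) 2 by (intro exI[of _ "image_mset (insert {partner i, u}) M1"]) auto
  next
    case 3
    note Z = row_end_rung_xz[OF V[unfolded 3(1)] i1 P 3(2)]
    show ?thesis using IH[OF Z(1)] unfolding ncd_matches_def count Z(2) using 3 by simp
  next
    case 4
    then have e: "\<epsilon> i \<noteq> 0" by simp
    note Z = row_end_rung_y[OF V[unfolded 4(1)] i1 P e]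
    show ?thesis using IH[OF Z(1)] unfolding ncd_matches_def count Z(2) using 4 by simp
  qed
qed

lemma ncd_matches_state:
  "state_inv i j \<sigma> D u zp yp \<Longrightarrow> ncd_matches i j \<sigma> D u zp yp"
proof (induction "i * (n + 1) + (n - j)" arbitrary: i j \<sigma> D u zp yp rule: less_induct)
  case less
  show ?case
  proof (cases "i = 0")
    case True then show ?thesis using ncd_matches_no_rows less.prems by simp
  next
    case False
    then have i1: "1 \<le> i" by simp
    have ain: "a i \<le> n" using a_le_n[OF i1 state_invD(1)[OF less.prems i1]] .
    have "j < a i" using state_invD(5)[OF less.prems i1] .
    show ?thesis
    proof (cases "\<exists>c. j < c \<and> c < a i \<and> c \<notin> D")
      case True
      define c0 where "c0 = (LEAST c. j < c \<and> c < a i \<and> c \<notin> D)"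
      have c0: "j < c0" "c0 < a i" "c0 \<notin> D" using LeastI_ex[OF True] unfolding c0_def by auto
      have c0min: "\<forall>c. j < c \<and> c < a i \<and> c \<notin> D \<longrightarrow> c0 \<le> c" unfolding c0_def by (auto intro: Least_le)
      have "i * (n + 1) + (n - c0) < i * (n + 1) + (n - j)" using c0 ain by simp
      then show ?thesis using ncd_matches_next_cell[OF less.prems i1 c0 c0min] less.hyps by blast
    next
      case False
      have "(i - 1) * (n + 1) + (n - 0) < i * (n + 1) + (n - j)"
        using i1 \<open>j < a i\<close> ain by (cases i) auto
      then show ?thesis using ncd_matches_row_end[OF less.prems i1] False less.hyps by blast
    qed
  qed
qed

lemma state_inv_initial: "state_inv m 0 0 {} m (\<lambda>c. m + c) (\<lambda>c. m + 2*n + 1 - c)"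
proof (rule state_invI_xz)
  show "1 \<le> m" using m_pos by simp
  show "m \<le> m" by simp
  show "{} \<subseteq> {1..n}" by simp
  show "\<forall>c\<in>open_cols m {}. \<forall>c'\<in>open_cols m {}. c < c' \<longrightarrow> m + c < m + c' \<and> m + 2*n + 1 - c' < m + 2*n + 1 - c"
  proof (intro ballI impI)
    fix c c' assume "c \<in> open_cols m {}" "c' \<in> open_cols m {}" "c < c'"
    then have "c' \<le> n" "c < c'" unfolding open_cols_iff by auto
    then show "m + c < m + c' \<and> m + 2*n + 1 - c' < m + 2*n + 1 - c" by simp
  qed
  show "\<forall>c\<in>open_cols m {}. m \<le> m + c \<and> 1 \<le> m + c \<and> m + c \<le> m + n \<and> m + n < m + 2*n + 1 - c \<and> m + 2*n + 1 - c \<le> m + 2*n"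
  proof
    fix c assume "c \<in> open_cols m {}"
    then have "1 \<le> c" "c \<le> n" unfolding open_cols_iff by auto
    then show "m \<le> m + c \<and> 1 \<le> m + c \<and> m + c \<le> m + n \<and> m + n < m + 2*n + 1 - c \<and> m + 2*n + 1 - c \<le> m + 2*n" by arith
  qed
  show "0 < a m" using am by simp
  show "{} \<subseteq> {..<a m}" by simp
  show "\<forall>c\<in>open_cols m {}. c < a m \<longrightarrow> m + c \<le> m + c \<and> m + 2*n + 1 - c \<le> m + 2*n + 1 - c" by simp
  show "\<forall>c\<in>open_cols m {}. a m < c \<longrightarrow> m + c = m + c \<and> m + 2*n + 1 - c = m + 2*n + 1 - c" by simp
  show "m \<le> m \<and> m < m + a m \<and> (\<forall>c\<in>open_cols m {}. (c \<le> 0 \<longrightarrow> m + c < m) \<and> (0 < c \<longrightarrow> m < m + c))"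
  proof (intro conjI ballI impI)
    show "m \<le> m" by simp
    show "m < m + a m" using am by simp
  next
    fix c assume "c \<in> open_cols m {}" "c \<le> 0"
    then show "m + c < m" unfolding open_cols_iff by simp
  next
    fix c assume "c \<in> open_cols m {}" "0 < c"
    then show "m < m + c" by simp
  qed
qed

lemma Ediag_eq_diagram: "Ediag m n a \<epsilon> = diagram m m {} (\<lambda>c. m + c) (\<lambda>c. m + 2*n + 1 - c)"
proof -
  let ?rows = "{{xpt m n i, ypt m n (a i)} | i. i \<in> {1..m} \<and> \<epsilon> i = 0}
      \<union> {{xpt m n i, zpt m n (a i)} | i. i \<in> {1..m} \<and> \<epsilon> i = 1}"
  have "X \<in> ?rows" if X: "X \<in> {{k, partner k} | k. 1 \<le> k \<and> k \<le> m}" for X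
  proof -
    obtain k where k: "1 \<le> k" "k \<le> m" "X = {k, partner k}" using X by blast
    show ?thesis
    proof (cases "\<epsilon> k = 0")
      case True
      then have "X = {xpt m n k, ypt m n (a k)}" using k unfolding xpt_def ypt_def partner_def by simp
      then show ?thesis using k True by auto
    next
      case False
      then have "\<epsilon> k = 1" using eps_cases[OF k(1,2)] by simp
      moreover from this have "X = {xpt m n k, zpt m n (a k)}" using k unfolding xpt_def zpt_def partner_def by simp
      ultimately show ?thesis using k by auto
    qed
  qed
  moreover have "?rows \<subseteq> {{k, partner k} | k. 1 \<le> k \<and> k \<le> m}"
    unfolding xpt_def ypt_def zpt_def partner_def by force
  ultimately have rows: "?rows = {{k, partner k} | k. 1 \<le> k \<and> k \<le> m}" by blast
  have cols: "{{ypt m n j, zpt m n j} | j. j \<in> {1..n} - a ` {1..m}} = rungs (open_cols m {}) (\<lambda>c. m + c) (\<lambda>c. m + 2*n + 1 - c)"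
    unfolding rungs_def open_cols_def ypt_def zpt_def by (auto simp: insert_commute)
  have "pending m \<union> {{m, partner m}} = {{k, partner k} | k. 1 \<le> k \<and> k \<le> m}"
    unfolding pending_def using m_pos by (auto simp: le_less)
  moreover have "1 \<le> m" using m_pos by simp
  ultimately show ?thesis unfolding Ediag_def rows cols by (simp add: diagram_pos Un_assoc)
qed

lemma partner_eq_iff:
  assumes "k \<in> {1..m}" "k' \<in> {1..m}"
  shows "partner k = partner k' \<longleftrightarrow> k = k'"
  using assms a_le_n[of k] a_le_n[of k'] a_inj[of k k'] unfolding partner_def by auto

text \<open>The chords of the initial diagram, indexed by their left endpoints: \<open>x\<^sub>k\<close> for the rows and
  \<open>z\<^sub>c\<close> for the columns that are not of the form \<open>a k\<close>.\<close>

definition initial_lefts :: "nat set" where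
  "initial_lefts = {1..m} \<union> (\<lambda>c. m + c) ` open_cols m {}"

definition initial_right :: "nat \<Rightarrow> nat" where
  "initial_right x = (if x \<le> m then partner x else 2 * m + 2 * n + 1 - x)"

lemma open_cols_initial: "c \<in> open_cols m {} \<longleftrightarrow> 1 \<le> c \<and> c \<le> n \<and> (\<forall>k \<in> {1..m}. c \<noteq> a k)"
  unfolding open_cols_iff by auto

lemma initial_leftsE:
  assumes "x \<in> initial_lefts"
  obtains "x \<in> {1..m}" "initial_right x = partner x"
    | c where "x = m + c" "1 \<le> c" "c \<le> n" "\<forall>k \<in> {1..m}. c \<noteq> a k" "initial_right x = m + 2 * n + 1 - c"
  using assms open_cols_initial unfolding initial_lefts_def initial_right_def by fastforce

lemma Ediag_eq_initial_pairs: "Ediag m n a \<epsilon> = (\<lambda>x. {x, initial_right x}) ` initial_lefts"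
proof -
  have "pending m = (\<lambda>x. {x, initial_right x}) ` {1..<m}" unfolding pending_def initial_right_def by auto
  moreover have "{1..m} = insert m {1..<m}" using m_pos by auto
  ultimately have rows: "pending m \<union> {{m, partner m}} = (\<lambda>x. {x, initial_right x}) ` {1..m}"
    unfolding initial_right_def by auto
  have "initial_right (m + c) = m + 2 * n + 1 - c" if "c \<in> open_cols m {}" for c
    using that open_cols_initial unfolding initial_right_def by auto
  then have "(\<lambda>x. {x, initial_right x}) ` (\<lambda>c. m + c) ` open_cols m {}
      = rungs (open_cols m {}) (\<lambda>c. m + c) (\<lambda>c. m + 2 * n + 1 - c)"
    unfolding image_image rungs_def by auto
  moreover have "1 \<le> m" using m_pos by simp
  ultimately show ?thesis
    unfolding Ediag_eq_diagram initial_lefts_def image_Un rows[symmetric] by (simp add: diagram_pos)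
qed

lemma partner_ne_rung_end:
  assumes "k \<in> {1..m}" "c \<le> n" "c \<noteq> a k"
  shows "partner k \<noteq> m + 2 * n + 1 - c"
  using assms a_le_n[of k] unfolding partner_def by auto

lemma inj_on_initial_right: "inj_on initial_right initial_lefts"
proof (rule inj_onI)
  fix x y assume x: "x \<in> initial_lefts" and y: "y \<in> initial_lefts" and eq: "initial_right x = initial_right y"
  from x show "x = y"
  proof (cases rule: initial_leftsE)
    case x_row: 1
    from y show ?thesis
    proof (cases rule: initial_leftsE)
      case 1 then show ?thesis using x_row eq partner_eq_iff by simp
    next
      case (2 c) then show ?thesis using x_row eq partner_ne_rung_end[of x c] by simp
    qed
  next
    case x_col: (2 c)
    from y show ?thesis
    proof (cases rule: initial_leftsE)
      case 1 then show ?thesis using x_col eq partner_ne_rung_end[of y c] by simp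
    next
      case (2 c') then show ?thesis using x_col eq by simp
    qed
  qed
qed

lemma initial_right_not_left: "initial_right ` initial_lefts \<inter> initial_lefts = {}"
proof -
  have "initial_right y \<notin> initial_lefts" if y: "y \<in> initial_lefts" for y
  proof
    assume r: "initial_right y \<in> initial_lefts"
    from y show False
    proof (cases rule: initial_leftsE)
      case y_row: 1
      have "1 \<le> a y" "a y \<le> n" using y_row(1) a_ge1 a_le_n by auto
      with r y_row show False
        by (cases rule: initial_leftsE) (auto simp: partner_def split: if_splits)
    next
      case (2 c)
      with r show False by (cases rule: initial_leftsE) auto
    qed
  qed
  then show ?thesis by blast
qed

lemma proper_diagram_Ediag: "proper_diagram (Ediag m n a \<epsilon>)"
  unfolding Ediag_eq_initial_pairs
proof (rule proper_diagram_image_pairs)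
  show "finite initial_lefts" unfolding initial_lefts_def open_cols_def by simp
  show "inj_on (\<lambda>x. x) initial_lefts" by simp
  show "inj_on initial_right initial_lefts" by (rule inj_on_initial_right)
  show "(\<lambda>x. x) ` initial_lefts \<inter> initial_right ` initial_lefts = {}" using initial_right_not_left by auto
qed

lemma f_count_eq_g_count: "f_count m n a \<epsilon> k = g_count m a \<epsilon> k"
proof -
  obtain M where M: "ncd_rel (Ediag m n a \<epsilon>) M" "\<forall>k. stat_count stat k M = young_count a \<epsilon> m 0 0 {} k"
    using ncd_matches_state[OF state_inv_initial] unfolding ncd_matches_def Ediag_eq_diagram by blast
  have "f_count m n a \<epsilon> k = stat_count stat k M"
    unfolding f_count_def stat_count_def stat_def NCD_eqI[OF proper_diagram_Ediag M(1)] ..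
  then show ?thesis using M(2) g_count_eq_young_count[OF m_pos] by simp
qed

end

theorem theorem1:
  fixes m n k :: nat and a \<epsilon> :: "nat \<Rightarrow> nat"
  assumes "0 < m" and "m \<le> n"
    and "a 1 = n"
    and "\<And>i. 1 \<le> i \<Longrightarrow> i < m \<Longrightarrow> a i > a (i + 1)"
    and "a m \<ge> 1"
    and "\<And>i. i \<in> {1..m} \<Longrightarrow> \<epsilon> i \<in> {0, 1}"
    and "k \<le> n"
  shows "f_count m n a \<epsilon> k = g_count m a \<epsilon> k"
  by (rule f_count_eq_g_count[OF assms(1,3-6)])

end
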